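(* Let $\Phi$ be a Leonard system in $\mathcal A$ with parameter array $(\theta_i,\theta^*_i,i=0..d;\varphi_j,\phi_j,j=1..d)$ and let $x_i=\mathrm{tr}(E^*_iAE^*_{i-1}A)$ $(1\le i\le d)$. Then $$x_i=\varphi_i\phi_i\frac{\tau^*_{i-1}(\theta^*_{i-1})\,\eta^*_{d-i}(\theta^*_i)}{\tau^*_i(\theta^*_i)\,\eta^*_{d-i+1}(\theta^*_{i-1})}\qquad(1\le i\le d).$$
   Context: Let $\mathbb K$ be a field, $d\ge 0$ an integer, and $\mathcal A$ a $\mathbb K$-algebra isomorphic to $\mathrm{Mat}_{d+1}(\mathbb K)$, with identity $I$ and trace $\mathrm{tr}$. An element $A\in\mathcal A$ is multiplicity-free if it has $d+1$ mutually distinct eigenvalues in $\mathbb K$; if $\theta_0,\dots,\theta_d$ is an ordering of them, the primitive idempotent of $A$ associated with $\theta_i$ is $E_i=\prod_{j\ne i}(A-\theta_jI)/(\theta_i-\theta_j)$. A Leonard system in $\mathcal A$ is a sequence $\Phi=(A;A^*;\{E_i\}_{i=0}^d;\{E^*_i\}_{i=0}^d)$ such that: (i) $A,A^*$ are multiplicity-free; (ii) $E_0,\dots,E_d$ is an ordering of the primitive idempotents of $A$; (iii) $E^*_0,\dots,E^*_d$ is an ordering of those of $A^*$; (iv) $E_iA^*E_j=0$ if $|i-j|>1$ and $\ne0$ if $|i-j|=1$ $(0\le i,j\le d)$; (v) $E^*_iAE^*_j=0$ if $|i-j|>1$ and $\neq0$ if $|i-j|=1$ $(0\le i,j\le d)$.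 $\theta_i$ (resp. $\theta^*_i$) is the eigenvalue of $A$ (resp. $A^*$) for $E_i$ (resp. $E^*_i$). It is known that there exist unique nonzero scalars $\varphi_1,\dots,\varphi_d\in\mathbb K$ (first split sequence) such that for some $\mathbb K$-algebra isomorphism $\natural:\mathcal A\to\mathrm{Mat}_{d+1}(\mathbb K)$, $A^\natural$ is lower bidiagonal with diagonal $\theta_0,\dots,\theta_d$ and subdiagonal entries all $1$, and $A^{*\natural}$ is upper bidiagonal with diagonal $\theta^*_0,\dots,\theta^*_d$ and $(A^{*\natural})_{i-1,i}=\varphi_i$. The second split sequence $\phi_1,\dots,\phi_d$ is the first split sequence of $(A;A^*;\{E_{d-i}\}_{i=0}^d;\{E^*_i\}_{i=0}^d)$. Polynomials: $\tau^*_i=\prod_{h=0}^{i-1}(\lambda-\theta^*_h)$, $\eta^*_i=\prod_{h=0}^{i-1}(\lambda-\theta^*_{d-h})$. *)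

theory Defs
  imports "Jordan_Normal_Form.Matrix" "Jordan_Normal_Form.Char_Poly"
begin

text \<open>We take the algebra to be Mat_{d+1}(K) itself (n = d+1).\<close>

definition mat_tr :: "'a::comm_ring_1 mat \<Rightarrow> 'a" where
  "mat_tr M = (\<Sum>i<dim_row M. M $$ (i, i))"

definition multiplicity_free :: "nat \<Rightarrow> 'a::field mat \<Rightarrow> bool" where
  "multiplicity_free d A \<longleftrightarrow>
     (\<exists>\<theta>::nat \<Rightarrow> 'a. inj_on \<theta> {0..d} \<and> (\<forall>i\<le>d. eigenvalue A (\<theta> i)))"

definition prim_idem :: "nat \<Rightarrow> 'a::field mat \<Rightarrow> (nat \<Rightarrow> 'a) \<Rightarrow> nat \<Rightarrow> 'a mat" where
  "prim_idem d A \<theta> i =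
     foldr (\<lambda>j M. ((1 / (\<theta> i - \<theta> j)) \<cdot>\<^sub>m (A - \<theta> j \<cdot>\<^sub>m 1\<^sub>m (Suc d))) * M)
           (filter (\<lambda>j. j \<noteq> i) [0..<Suc d]) (1\<^sub>m (Suc d))"

definition eigen_ordering :: "nat \<Rightarrow> 'a::field mat \<Rightarrow> (nat \<Rightarrow> 'a) \<Rightarrow> bool" where
  "eigen_ordering d A \<theta> \<longleftrightarrow> A \<in> carrier_mat (Suc d) (Suc d) \<and>
     inj_on \<theta> {0..d} \<and> (\<forall>i\<le>d. eigenvalue A (\<theta> i)) \<and>
     (\<forall>k. eigenvalue A k \<longrightarrow> k \<in> \<theta> ` {0..d})"

text \<open>Leonard system (A; A*; E_i; E*_i) with E_i = prim_idem d A \<theta> i,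
  E*_i = prim_idem d As \<theta>s i.\<close>
definition leonard_system ::
  "nat \<Rightarrow> 'a::field mat \<Rightarrow> 'a mat \<Rightarrow> (nat \<Rightarrow> 'a) \<Rightarrow> (nat \<Rightarrow> 'a) \<Rightarrow> bool" where
  "leonard_system d A As \<theta> \<theta>s \<longleftrightarrow>
     multiplicity_free d A \<and> multiplicity_free d As \<and>
     eigen_ordering d A \<theta> \<and> eigen_ordering d As \<theta>s \<and>
     (\<forall>i\<le>d. \<forall>j\<le>d.
        (1 < \<bar>int i - int j\<bar> \<longrightarrow> prim_idem d A \<theta> i * As * prim_idem d A \<theta> j = 0\<^sub>m (Suc d) (Suc d)) \<and>
        (\<bar>int i - int j\<bar> = 1 \<longrightarrow> prim_idem d A \<theta> i * As * prim_idem d A \<theta> j \<noteq> 0\<^sub>m (Suc d) (Suc d))) \<and>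
     (\<forall>i\<le>d. \<forall>j\<le>d.
        (1 < \<bar>int i - int j\<bar> \<longrightarrow> prim_idem d As \<theta>s i * A * prim_idem d As \<theta>s j = 0\<^sub>m (Suc d) (Suc d)) \<and>
        (\<bar>int i - int j\<bar> = 1 \<longrightarrow> prim_idem d As \<theta>s i * A * prim_idem d As \<theta>s j \<noteq> 0\<^sub>m (Suc d) (Suc d)))"

definition alg_iso :: "nat \<Rightarrow> ('a::field mat \<Rightarrow> 'a mat) \<Rightarrow> bool" where
  "alg_iso n f \<longleftrightarrow> bij_betw f (carrier_mat n n) (carrier_mat n n) \<and>
     (\<forall>X\<in>carrier_mat n n. \<forall>Y\<in>carrier_mat n n.
        f (X + Y) = f X + f Y \<and> f (X * Y) = f X * f Y) \<and>
     (\<forall>c. \<forall>X\<in>carrier_mat n n. f (c \<cdot>\<^sub>m X) = c \<cdot>\<^sub>m f X) \<and>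
     f (1\<^sub>m n) = 1\<^sub>m n"

definition lower_bidiag :: "nat \<Rightarrow> (nat \<Rightarrow> 'a::field) \<Rightarrow> 'a mat" where
  "lower_bidiag d \<theta> = mat (Suc d) (Suc d)
     (\<lambda>(r, c). if r = c then \<theta> r else if r = Suc c then 1 else 0)"

definition upper_bidiag :: "nat \<Rightarrow> (nat \<Rightarrow> 'a::field) \<Rightarrow> (nat \<Rightarrow> 'a) \<Rightarrow> 'a mat" where
  "upper_bidiag d \<theta>s \<phi> = mat (Suc d) (Suc d)
     (\<lambda>(r, c). if r = c then \<theta>s r else if c = Suc r then \<phi> c else 0)"

definition first_split_seq ::
  "nat \<Rightarrow> 'a::field mat \<Rightarrow> 'a mat \<Rightarrow> (nat \<Rightarrow> 'a) \<Rightarrow> (nat \<Rightarrow> 'a) \<Rightarrow> (nat \<Rightarrow> 'a) \<Rightarrow> bool" where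
  "first_split_seq d A As \<theta> \<theta>s \<phi> \<longleftrightarrow>
     (\<forall>i. 1 \<le> i \<and> i \<le> d \<longrightarrow> \<phi> i \<noteq> 0) \<and>
     (\<exists>f. alg_iso (Suc d) f \<and> f A = lower_bidiag d \<theta> \<and> f As = upper_bidiag d \<theta>s \<phi>)"

definition tau_s :: "(nat \<Rightarrow> 'a::field) \<Rightarrow> nat \<Rightarrow> 'a \<Rightarrow> 'a" where
  "tau_s \<theta>s i x = (\<Prod>h<i. x - \<theta>s h)"

definition eta_s :: "nat \<Rightarrow> (nat \<Rightarrow> 'a::field) \<Rightarrow> nat \<Rightarrow> 'a \<Rightarrow> 'a" where
  "eta_s d \<theta>s i x = (\<Prod>h<i. x - \<theta>s (d - h))"

end

theory Submission
  imports Defs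
begin

(* Write F = E_0, T_j = tr(F E*_j) and N = tr(F E*_i A E*_(i-1)).
   In the split bases A and A* are bidiagonal, and the images of E*_j and F are idempotents
   commuting with a bidiagonal matrix; this forces their entries to factor as in a rank-one
   matrix, so E X E = tr(X E) E for E = E*_j and E = F. Hence x_i T_i T_(i-1) equals
   N tr(F E*_(i-1) A E*_i), and the second factor is N again because A commutes with F and
   E*_0 + ... + E*_(i-1) cuts A into its tridiagonal blocks.
   In the first split basis F has a single nonzero column, which gives N a_(i-1) = a_i T_(i-1)
   for the (0,j) entries a_j of the images of the E*_j; in the second split basis F has a single
   nonzero row, which gives N b_i = b_(i-1) T_i for the (j,d) entries b_j. So
   x_i a_(i-1) b_i = a_i b_(i-1), and the bidiagonal eigen-equations evaluate
   a_j tau*_j(theta*_j) = phi_1 ... phi_j and b_j eta*_(d-j)(theta*_j) = phi'_(j+1) ... phi'_d. *)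

declare minus_carrier_mat[simp] upt_Suc[simp del]

lemma index_mult_mat_sum:
  assumes "A \<in> carrier_mat n m" "B \<in> carrier_mat m p" "i < n" "j < p"
  shows "(A * B) $$ (i,j) = (\<Sum>k<m. A $$ (i,k) * B $$ (k,j))"
  using assms by (auto simp: scalar_prod_def lessThan_atLeast0 intro!: sum.cong)

lemma smult_smult_mat: "a \<cdot>\<^sub>m (b \<cdot>\<^sub>m A) = (a * b) \<cdot>\<^sub>m (A :: 'a::semigroup_mult mat)"
  by (rule eq_matI) (auto simp: mult.assoc)

lemma one_smult_mat: "1 \<cdot>\<^sub>m A = (A :: 'a::monoid_mult mat)"
  by (rule eq_matI) auto

lemma transpose_smult_mat: "transpose_mat (c \<cdot>\<^sub>m A) = c \<cdot>\<^sub>m transpose_mat A"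
  by (rule eq_matI) auto

lemma mat_eq_zeroI:
  assumes "A \<in> carrier_mat n m" "\<And>r c. r < n \<Longrightarrow> c < m \<Longrightarrow> A $$ (r,c) = 0"
  shows "A = 0\<^sub>m n m"
  using assms by (intro eq_matI) auto

lemma square_mult_carrier[simp]:
  "A \<in> carrier_mat n n \<Longrightarrow> B \<in> carrier_mat n n \<Longrightarrow> A * B \<in> carrier_mat n n"
  by simp

lemma eq_of_minus_eq_zero_mat:
  fixes A B :: "'a::ab_group_add mat"
  assumes "A \<in> carrier_mat n m" "B \<in> carrier_mat n m" "A - B = 0\<^sub>m n m"
  shows "A = B"
proof (rule eq_matI)
  fix i j assume ij: "i < dim_row B" "j < dim_col B"
  have "(A - B) $$ (i,j) = 0" using assms(2,3) ij by simp
  then show "A $$ (i,j) = B $$ (i,j)" using ij by simp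
qed (use assms in auto)

lemma mat_tr_mult_commute:
  fixes A B :: "'a::comm_ring_1 mat"
  assumes A: "A \<in> carrier_mat n m" and B: "B \<in> carrier_mat m n"
  shows "mat_tr (A * B) = mat_tr (B * A)"
proof -
  have "mat_tr (A * B) = (\<Sum>i<n. \<Sum>k<m. A $$ (i,k) * B $$ (k,i))"
    unfolding mat_tr_def using A B
    by (auto simp del: index_mult_mat(1) simp: index_mult_mat_sum[OF A B] intro!: sum.cong)
  also have "\<dots> = (\<Sum>k<m. \<Sum>i<n. B $$ (k,i) * A $$ (i,k))"
    by (subst sum.swap) (simp add: mult.commute)
  also have "\<dots> = mat_tr (B * A)"
    unfolding mat_tr_def using A B
    by (auto simp del: index_mult_mat(1) simp: index_mult_mat_sum[OF B A] intro!: sum.cong)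
  finally show ?thesis .
qed

lemma mat_tr_smult: "A \<in> carrier_mat n n \<Longrightarrow> mat_tr (c \<cdot>\<^sub>m A) = c * mat_tr A"
  unfolding mat_tr_def by (simp add: sum_distrib_left)

lemma mat_tr_add:
  "A \<in> carrier_mat n n \<Longrightarrow> B \<in> carrier_mat n n \<Longrightarrow> mat_tr (A + B) = mat_tr A + mat_tr B"
  unfolding mat_tr_def by (simp add: sum.distrib)

lemma mat_tr_complement_swap:
  fixes A F P Q :: "'a::comm_ring_1 mat"
  assumes carrier: "A \<in> carrier_mat n n" "F \<in> carrier_mat n n" "P \<in> carrier_mat n n"
      "Q \<in> carrier_mat n n"
    and AF: "A * F = F * A" and PQ: "P + Q = 1\<^sub>m n"
  shows "mat_tr (F * (P * A * Q)) = mat_tr (F * (Q * A * P))"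
proof -
  have QP: "Q + P = 1\<^sub>m n" using PQ carrier by (simp add: comm_add_mat[of Q n n])
  have "mat_tr (F * (P * A * Q)) + mat_tr (F * (P * A * P)) = mat_tr (F * (P * A * (Q + P)))"
    using carrier by (simp add: mat_tr_add[of _ n] mult_add_distrib_mat[of _ n n _ n])
  also have "\<dots> = mat_tr ((F * P) * A)"
    using carrier by (simp add: QP right_mult_one_mat[of _ n n])
  also have "\<dots> = mat_tr (A * (F * P))"
    using carrier by (intro mat_tr_mult_commute) auto
  also have "A * (F * P) = F * (A * P)"
  proof -
    have "A * (F * P) = (A * F) * P" using carrier by simp
    also have "\<dots> = F * (A * P)" using carrier by (simp add: AF)
    finally show ?thesis .
  qed
  also have "mat_tr (F * (A * P)) = mat_tr (F * ((Q + P) * A * P))"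
    using carrier by (simp add: QP left_mult_one_mat[of _ n n])
  also have "\<dots> = mat_tr (F * (Q * A * P)) + mat_tr (F * (P * A * P))"
    using carrier by (simp add: mat_tr_add[of _ n] add_mult_distrib_mat[of _ n n _ _ n]
        mult_add_distrib_mat[of _ n n _ n])
  finally show ?thesis by simp
qed

lemma prod_list_map_eq_one: "(\<And>x. x \<in> set xs \<Longrightarrow> f x = 1) \<Longrightarrow> prod_list (map f xs) = 1"
  by (induction xs) auto

lemma upt_split_at:
  assumes "j < n"
  shows "[0..<n] = [0..<j] @ j # [Suc j..<n]"
  using assms upt_add_eq_append[of 0 j "n - j"] by (simp add: upt_conv_Cons)

lemma filter_neq_upt:
  assumes "j < n"
  shows "filter (\<lambda>k. k \<noteq> j) [0..<n] = [0..<j] @ [Suc j..<n]"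
  by (subst upt_split_at[OF assms]) (auto intro: filter_True)

definition mat_prod :: "nat \<Rightarrow> (nat \<Rightarrow> 'a::semiring_1 mat) \<Rightarrow> nat list \<Rightarrow> 'a mat" where
  "mat_prod n h ks = foldr (\<lambda>k M. h k * M) ks (1\<^sub>m n)"

lemma mat_prod_Nil[simp]: "mat_prod n h [] = 1\<^sub>m n"
  and mat_prod_Cons[simp]: "mat_prod n h (k # ks) = h k * mat_prod n h ks"
  by (simp_all add: mat_prod_def)

lemma mat_prod_carrier:
  "(\<And>k. k \<in> set ks \<Longrightarrow> h k \<in> carrier_mat n n) \<Longrightarrow> mat_prod n h ks \<in> carrier_mat n n"
  by (induction ks) (auto intro: mult_carrier_mat)

lemma mat_prod_append:
  fixes h :: "nat \<Rightarrow> 'a::semiring_1 mat"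
  assumes "\<And>k. k \<in> set (xs @ ys) \<Longrightarrow> h k \<in> carrier_mat n n"
  shows "mat_prod n h (xs @ ys) = mat_prod n h xs * mat_prod n h ys"
  using assms
proof (induction xs)
  case Nil
  then have "mat_prod n h ys \<in> carrier_mat n n" by (intro mat_prod_carrier) auto
  then show ?case by (simp add: left_mult_one_mat)
next
  case (Cons x xs)
  have "h x \<in> carrier_mat n n" "mat_prod n h xs \<in> carrier_mat n n" "mat_prod n h ys \<in> carrier_mat n n"
    using Cons.prems by (auto intro: mat_prod_carrier)
  then show ?case using Cons by (simp add: assoc_mult_mat[of "h x" n n _ n _ n])
qed

lemma mat_prod_commute:
  fixes h :: "nat \<Rightarrow> 'a::semiring_1 mat"
  assumes h: "\<And>k. k \<in> set ks \<Longrightarrow> h k \<in> carrier_mat n n" and Y: "Y \<in> carrier_mat n n"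
    and comm: "\<And>k. k \<in> set ks \<Longrightarrow> Y * h k = h k * Y"
  shows "Y * mat_prod n h ks = mat_prod n h ks * Y"
  using h comm
proof (induction ks)
  case Nil
  then show ?case using Y by (simp add: left_mult_one_mat right_mult_one_mat)
next
  case (Cons k ks)
  have hk: "h k \<in> carrier_mat n n" and P: "mat_prod n h ks \<in> carrier_mat n n"
    using Cons.prems by (auto intro: mat_prod_carrier)
  have "Y * (h k * mat_prod n h ks) = h k * (Y * mat_prod n h ks)"
    using Y hk P Cons.prems(2)[of k] by (simp flip: assoc_mult_mat)
  also have "\<dots> = (h k * mat_prod n h ks) * Y"
    using Y hk P Cons by (simp add: assoc_mult_mat[OF hk P Y])
  finally show ?case by simp
qed

lemma mat_prod_smult:
  fixes h :: "nat \<Rightarrow> 'a::comm_ring_1 mat"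
  assumes "\<And>k. k \<in> set ks \<Longrightarrow> h k \<in> carrier_mat n n"
  shows "mat_prod n (\<lambda>k. c k \<cdot>\<^sub>m h k) ks = prod_list (map c ks) \<cdot>\<^sub>m mat_prod n h ks"
  using assms
proof (induction ks)
  case Nil
  then show ?case by (simp add: one_smult_mat)
next
  case (Cons k ks)
  have "h k \<in> carrier_mat n n" "mat_prod n h ks \<in> carrier_mat n n"
    using Cons.prems by (auto intro: mat_prod_carrier)
  then show ?case
    using Cons by (simp add: mult_smult_distrib[of _ n n _ n] mult_smult_assoc_mat[of _ n n _ n]
        smult_smult_mat mult.commute)
qed

lemma mat_prod_shifts_mult_eigen:
  fixes A :: "'a::comm_ring_1 mat"
  assumes A: "A \<in> carrier_mat n n" and Y: "Y \<in> carrier_mat n m" and AY: "A * Y = \<mu> \<cdot>\<^sub>m Y"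
  shows "mat_prod n (\<lambda>k. c k \<cdot>\<^sub>m (A - a k \<cdot>\<^sub>m 1\<^sub>m n)) ks * Y
    = prod_list (map (\<lambda>k. c k * (\<mu> - a k)) ks) \<cdot>\<^sub>m Y"
proof (induction ks)
  case Nil
  then show ?case using Y by (simp add: one_smult_mat)
next
  case (Cons k ks)
  let ?h = "\<lambda>k. c k \<cdot>\<^sub>m (A - a k \<cdot>\<^sub>m 1\<^sub>m n)"
  let ?p = "prod_list (map (\<lambda>k. c k * (\<mu> - a k)) ks)"
  have P: "mat_prod n ?h ks \<in> carrier_mat n n" using A by (intro mat_prod_carrier) auto
  have "(A - a k \<cdot>\<^sub>m 1\<^sub>m n) * Y = A * Y - a k \<cdot>\<^sub>m Y"
    using A Y by (simp add: minus_mult_distrib_mat[of _ n n] mult_smult_assoc_mat[of _ n n _ m])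
  also have "\<dots> = (\<mu> - a k) \<cdot>\<^sub>m Y"
    using Y by (auto simp: AY algebra_simps)
  finally have shift: "(A - a k \<cdot>\<^sub>m 1\<^sub>m n) * Y = (\<mu> - a k) \<cdot>\<^sub>m Y" .
  have "?h k * mat_prod n ?h ks * Y = ?h k * (mat_prod n ?h ks * Y)"
    using A P Y by (intro assoc_mult_mat) auto
  also have "\<dots> = c k \<cdot>\<^sub>m ((A - a k \<cdot>\<^sub>m 1\<^sub>m n) * (?p \<cdot>\<^sub>m Y))"
    using A Y by (simp add: Cons mult_smult_assoc_mat[of _ n n _ m])
  also have "\<dots> = (c k * ?p) \<cdot>\<^sub>m ((A - a k \<cdot>\<^sub>m 1\<^sub>m n) * Y)"
    using A Y by (simp add: mult_smult_distrib[of _ n n _ m] smult_smult_mat)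
  also have "\<dots> = (c k * (\<mu> - a k) * ?p) \<cdot>\<^sub>m Y"
    by (simp add: shift smult_smult_mat mult_ac)
  finally show ?case by (simp add: ac_simps)
qed

definition mat_sum :: "nat \<Rightarrow> (nat \<Rightarrow> 'a::semiring_1 mat) \<Rightarrow> nat list \<Rightarrow> 'a mat" where
  "mat_sum n h ks = foldr (\<lambda>k M. h k + M) ks (0\<^sub>m n n)"

lemma mat_sum_Nil[simp]: "mat_sum n h [] = 0\<^sub>m n n"
  and mat_sum_Cons[simp]: "mat_sum n h (k # ks) = h k + mat_sum n h ks"
  by (simp_all add: mat_sum_def)

lemma mat_sum_carrier:
  "(\<And>k. k \<in> set ks \<Longrightarrow> h k \<in> carrier_mat n n) \<Longrightarrow> mat_sum n h ks \<in> carrier_mat n n"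
  by (induction ks) auto

lemma mat_sum_append:
  fixes h :: "nat \<Rightarrow> 'a::semiring_1 mat"
  assumes "\<And>k. k \<in> set (xs @ ys) \<Longrightarrow> h k \<in> carrier_mat n n"
  shows "mat_sum n h (xs @ ys) = mat_sum n h xs + mat_sum n h ys"
  using assms
proof (induction xs)
  case Nil
  then show ?case by (simp add: mat_sum_carrier)
next
  case (Cons x xs)
  then show ?case by (simp add: mat_sum_carrier assoc_add_mat[of _ n n])
qed

lemma mult_mat_sum:
  fixes h :: "nat \<Rightarrow> 'a::semiring_1 mat"
  assumes "\<And>k. k \<in> set ks \<Longrightarrow> h k \<in> carrier_mat n n" "X \<in> carrier_mat n n"
  shows "X * mat_sum n h ks = mat_sum n (\<lambda>k. X * h k) ks"
  using assms
proof (induction ks)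
  case (Cons k ks)
  have "h k \<in> carrier_mat n n" "mat_sum n h ks \<in> carrier_mat n n"
    using Cons.prems by (auto intro: mat_sum_carrier)
  then show ?case using Cons by (simp add: mult_add_distrib_mat[of X n n "h k" n])
qed simp

lemma mat_sum_mult:
  fixes h :: "nat \<Rightarrow> 'a::semiring_1 mat"
  assumes "\<And>k. k \<in> set ks \<Longrightarrow> h k \<in> carrier_mat n n" "X \<in> carrier_mat n n"
  shows "mat_sum n h ks * X = mat_sum n (\<lambda>k. h k * X) ks"
  using assms
proof (induction ks)
  case (Cons k ks)
  have "h k \<in> carrier_mat n n" "mat_sum n h ks \<in> carrier_mat n n"
    using Cons.prems by (auto intro: mat_sum_carrier)
  then show ?case using Cons by (simp add: add_mult_distrib_mat[of _ n n])
qed simp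

lemma mat_sum_zero: "(\<And>k. k \<in> set ks \<Longrightarrow> h k = 0\<^sub>m n n) \<Longrightarrow> mat_sum n h ks = 0\<^sub>m n n"
  by (induction ks) auto

lemma mat_sum_single:
  fixes h :: "nat \<Rightarrow> 'a::semiring_1 mat"
  assumes "\<And>k. k \<in> set (xs @ j # ys) \<Longrightarrow> h k \<in> carrier_mat n n"
    and "\<And>k. k \<in> set (xs @ ys) \<Longrightarrow> h k = 0\<^sub>m n n"
  shows "mat_sum n h (xs @ j # ys) = h j"
proof -
  have "mat_sum n h (xs @ j # ys) = mat_sum n h xs + (h j + mat_sum n h ys)"
    using assms(1) by (subst mat_sum_append) auto
  then show ?thesis using assms by (simp add: mat_sum_zero)
qed

lemma commute_shift:
  fixes M :: "'a::comm_ring_1 mat"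
  assumes M: "M \<in> carrier_mat n n" and X: "X \<in> carrier_mat n n" and MX: "M * X = X * M"
  shows "(M - a \<cdot>\<^sub>m 1\<^sub>m n) * X = X * (M - a \<cdot>\<^sub>m 1\<^sub>m n)"
proof -
  have "(M - a \<cdot>\<^sub>m 1\<^sub>m n) * X = M * X - a \<cdot>\<^sub>m X"
    using M X by (simp add: minus_mult_distrib_mat[of _ n n] mult_smult_assoc_mat[of _ n n _ n]
        left_mult_one_mat)
  also have "\<dots> = X * (M - a \<cdot>\<^sub>m 1\<^sub>m n)"
    using M X by (simp add: MX mult_minus_distrib_mat[of _ n n] mult_smult_distrib[of _ n n _ n]
        right_mult_one_mat)
  finally show ?thesis .
qed

context
  fixes n :: nat and f :: "'a::field mat \<Rightarrow> 'a mat"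
  assumes f: "alg_iso n f"
begin

lemma alg_iso_carrier: "X \<in> carrier_mat n n \<Longrightarrow> f X \<in> carrier_mat n n"
  using f unfolding alg_iso_def bij_betw_def by auto

lemma alg_iso_eq_iff: "X \<in> carrier_mat n n \<Longrightarrow> Y \<in> carrier_mat n n \<Longrightarrow> f X = f Y \<longleftrightarrow> X = Y"
  using f unfolding alg_iso_def bij_betw_def inj_on_def by auto

lemma alg_iso_add: "X \<in> carrier_mat n n \<Longrightarrow> Y \<in> carrier_mat n n \<Longrightarrow> f (X + Y) = f X + f Y"
  using f unfolding alg_iso_def by auto

lemma alg_iso_mult: "X \<in> carrier_mat n n \<Longrightarrow> Y \<in> carrier_mat n n \<Longrightarrow> f (X * Y) = f X * f Y"
  using f unfolding alg_iso_def by auto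

lemma alg_iso_smult: "X \<in> carrier_mat n n \<Longrightarrow> f (c \<cdot>\<^sub>m X) = c \<cdot>\<^sub>m f X"
  using f unfolding alg_iso_def by auto

lemma alg_iso_one: "f (1\<^sub>m n) = 1\<^sub>m n"
  using f unfolding alg_iso_def by auto

lemma alg_iso_zero: "f (0\<^sub>m n n) = 0\<^sub>m n n"
proof -
  have "0\<^sub>m n n = (0::'a) \<cdot>\<^sub>m 1\<^sub>m n" by (rule eq_matI) auto
  then show ?thesis by (simp add: alg_iso_smult alg_iso_one)
qed

lemma alg_iso_eq_zero_iff: "X \<in> carrier_mat n n \<Longrightarrow> f X = 0\<^sub>m n n \<longleftrightarrow> X = 0\<^sub>m n n"
  using alg_iso_eq_iff[of X "0\<^sub>m n n"] by (simp add: alg_iso_zero)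

lemma alg_iso_minus:
  assumes X: "X \<in> carrier_mat n n" and Y: "Y \<in> carrier_mat n n"
  shows "f (X - Y) = f X - f Y"
proof -
  have minus: "A - B = A + (-1) \<cdot>\<^sub>m B" if "B \<in> carrier_mat n n" for A B :: "'a mat"
    using that by (intro eq_matI) auto
  show ?thesis
    using X Y alg_iso_carrier[OF Y] by (simp add: minus alg_iso_add alg_iso_smult)
qed

lemma alg_iso_shift: "X \<in> carrier_mat n n \<Longrightarrow> f (X - c \<cdot>\<^sub>m 1\<^sub>m n) = f X - c \<cdot>\<^sub>m 1\<^sub>m n"
  by (simp add: alg_iso_minus alg_iso_smult alg_iso_one)

lemma alg_iso_mat_prod:
  "(\<And>k. k \<in> set ks \<Longrightarrow> h k \<in> carrier_mat n n) \<Longrightarrow> f (mat_prod n h ks) = mat_prod n (\<lambda>k. f (h k)) ks"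
  by (induction ks) (auto simp: alg_iso_one alg_iso_mult mat_prod_carrier)

lemma alg_iso_eigen:
  assumes "X \<in> carrier_mat n n" "E \<in> carrier_mat n n" "X * E = c \<cdot>\<^sub>m E"
  shows "f X * f E = c \<cdot>\<^sub>m f E"
  by (metis assms alg_iso_mult alg_iso_smult)

lemma alg_iso_eigen':
  assumes "X \<in> carrier_mat n n" "E \<in> carrier_mat n n" "E * X = c \<cdot>\<^sub>m E"
  shows "f E * f X = c \<cdot>\<^sub>m f E"
  by (metis assms alg_iso_mult alg_iso_smult)

end

section \<open>Annihilating products of triangular matrices\<close>

text \<open>\<open>K m c\<close> says that column \<open>c\<close> of the product of the first \<open>m\<close> factors is already zero.\<close>

lemma mat_prod_zero_columns:
  fixes N :: "nat \<Rightarrow> 'a::semiring_1 mat"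
  assumes N: "\<And>k. N k \<in> carrier_mat n n"
    and K0: "\<And>c. c < n \<Longrightarrow> \<not> K 0 c"
    and step: "\<And>m k c. m < n \<Longrightarrow> k < n \<Longrightarrow> c < n \<Longrightarrow> \<not> K m k \<Longrightarrow> K (Suc m) c \<Longrightarrow> N m $$ (k,c) = 0"
  shows "m \<le> n \<Longrightarrow> r < n \<Longrightarrow> c < n \<Longrightarrow> K m c \<Longrightarrow> mat_prod n N [0..<m] $$ (r,c) = 0"
proof (induction m arbitrary: r c)
  case 0
  then show ?case using K0 by blast
next
  case (Suc m)
  let ?X = "mat_prod n N [0..<m]"
  have X: "?X \<in> carrier_mat n n" using N by (intro mat_prod_carrier)
  have "mat_prod n N [0..<Suc m] = ?X * N m"
    using mat_prod_append[of "[0..<m]" "[m]" N n] N by (simp add: right_mult_one_mat[OF N] upt_Suc)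
  also have "(?X * N m) $$ (r,c) = (\<Sum>k<n. ?X $$ (r,k) * N m $$ (k,c))"
    using Suc.prems by (intro index_mult_mat_sum[OF X N]) auto
  also have "\<dots> = 0"
  proof (intro sum.neutral ballI)
    fix k assume "k \<in> {..<n}"
    then show "?X $$ (r,k) * N m $$ (k,c) = 0"
      using Suc.IH[of r k] Suc.prems step[of m k c] by (cases "K m k") auto
  qed
  finally show ?case .
qed

lemma upper_triangular_annihilated:
  fixes T :: "'a::comm_ring_1 mat"
  assumes T: "T \<in> carrier_mat n n" and tri: "upper_triangular T"
    and diag: "\<And>k. k < n \<Longrightarrow> T $$ (k,k) = \<delta> k"
  shows "mat_prod n (\<lambda>k. T - \<delta> k \<cdot>\<^sub>m 1\<^sub>m n) [0..<n] = 0\<^sub>m n n"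
proof -
  have "mat_prod n (\<lambda>k. T - \<delta> k \<cdot>\<^sub>m 1\<^sub>m n) [0..<n] $$ (r,c) = 0" if "r < n" "c < n" for r c
  proof (rule mat_prod_zero_columns[where K = "\<lambda>m c. c < m"])
    fix m k c assume "m < n" "k < n" "c < n" "\<not> k < m" "c < Suc m"
    then show "(T - \<delta> m \<cdot>\<^sub>m 1\<^sub>m n) $$ (k,c) = 0"
      using T diag upper_triangularD[OF tri, of c k] by (cases "k = c") (auto simp: less_Suc_eq)
  qed (use T that in auto)
  then show ?thesis using T by (intro mat_eq_zeroI mat_prod_carrier) auto
qed

lemma lower_triangular_annihilated:
  fixes T :: "'a::comm_ring_1 mat"
  assumes T: "T \<in> carrier_mat n n" and tri: "upper_triangular (transpose_mat T)"
    and diag: "\<And>k. k < n \<Longrightarrow> T $$ (n - 1 - k, n - 1 - k) = \<delta> k"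
  shows "mat_prod n (\<lambda>k. T - \<delta> k \<cdot>\<^sub>m 1\<^sub>m n) [0..<n] = 0\<^sub>m n n"
proof -
  have "mat_prod n (\<lambda>k. T - \<delta> k \<cdot>\<^sub>m 1\<^sub>m n) [0..<n] $$ (r,c) = 0" if "r < n" "c < n" for r c
  proof (rule mat_prod_zero_columns[where K = "\<lambda>m c. n - m \<le> c"])
    fix m k c assume mkc: "m < n" "k < n" "c < n" "\<not> n - m \<le> k" "n - Suc m \<le> c"
    show "(T - \<delta> m \<cdot>\<^sub>m 1\<^sub>m n) $$ (k,c) = 0"
    proof (cases "k = c")
      case True
      then have "c = n - Suc m" using mkc by arith
      then show ?thesis using True mkc T diag[of m] by simp
    next
      case False
      then show ?thesis using mkc T upper_triangularD[OF tri, of k c] by simp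
    qed
  qed (use T that in auto)
  then show ?thesis using T by (intro mat_eq_zeroI mat_prod_carrier) auto
qed

lemma prim_idem_carrier:
  "M \<in> carrier_mat (Suc d) (Suc d) \<Longrightarrow> prim_idem d M \<mu> j \<in> carrier_mat (Suc d) (Suc d)"
  unfolding prim_idem_def by (fold mat_prod_def) (auto intro: mat_prod_carrier)

locale distinct_annihilator =
  fixes d :: nat and M :: "'a::field mat" and \<mu> :: "nat \<Rightarrow> 'a"
  assumes carrier: "M \<in> carrier_mat (Suc d) (Suc d)"
    and distinct: "inj_on \<mu> {0..d}"
    and annihilates: "mat_prod (Suc d) (\<lambda>k. M - \<mu> k \<cdot>\<^sub>m 1\<^sub>m (Suc d)) [0..<Suc d] = 0\<^sub>m (Suc d) (Suc d)"
begin

abbreviation "E \<equiv> prim_idem d M \<mu>"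
abbreviation "shift k \<equiv> M - \<mu> k \<cdot>\<^sub>m 1\<^sub>m (Suc d)"

lemma shift_carrier[simp]: "shift k \<in> carrier_mat (Suc d) (Suc d)"
  using carrier by simp

lemma E_carrier[simp]: "E j \<in> carrier_mat (Suc d) (Suc d)"
  using carrier by (rule prim_idem_carrier)

lemma E_eq_smult_mat_prod:
  "E j = prod_list (map (\<lambda>k. 1 / (\<mu> j - \<mu> k)) (filter (\<lambda>k. k \<noteq> j) [0..<Suc d]))
      \<cdot>\<^sub>m mat_prod (Suc d) shift (filter (\<lambda>k. k \<noteq> j) [0..<Suc d])"
  unfolding prim_idem_def by (fold mat_prod_def) (rule mat_prod_smult, simp)

lemma shift_commute: "shift k * shift l = shift l * shift k"
  using commute_shift[OF carrier shift_carrier commute_shift[OF carrier carrier refl, symmetric]] .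

lemma E_commute: "M * E j = E j * M"
proof -
  let ?ks = "filter (\<lambda>k. k \<noteq> j) [0..<Suc d]"
  have "M * mat_prod (Suc d) shift ?ks = mat_prod (Suc d) shift ?ks * M"
    using carrier by (intro mat_prod_commute) (auto intro: commute_shift[symmetric])
  then show ?thesis
    using carrier mat_prod_carrier[of ?ks shift]
    by (simp add: E_eq_smult_mat_prod mult_smult_distrib[of _ "Suc d" "Suc d" _ "Suc d"]
        mult_smult_assoc_mat[of _ "Suc d" "Suc d" _ "Suc d"])
qed

lemma E_eigen:
  assumes j: "j \<le> d"
  shows "M * E j = \<mu> j \<cdot>\<^sub>m E j"
proof -
  let ?ks = "filter (\<lambda>k. k \<noteq> j) [0..<Suc d]"
  let ?G = "mat_prod (Suc d) shift [0..<j]" and ?H = "mat_prod (Suc d) shift [Suc j..<Suc d]"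
  have G: "?G \<in> carrier_mat (Suc d) (Suc d)" and H: "?H \<in> carrier_mat (Suc d) (Suc d)"
    by (auto intro: mat_prod_carrier)
  have "0\<^sub>m (Suc d) (Suc d) = mat_prod (Suc d) shift ([0..<j] @ j # [Suc j..<Suc d])"
    by (subst upt_split_at[of j "Suc d", symmetric]) (use j annihilates in simp_all)
  also have "\<dots> = ?G * (shift j * ?H)"
    by (subst mat_prod_append) auto
  also have "\<dots> = (?G * shift j) * ?H"
    by (rule assoc_mult_mat[OF G shift_carrier H, symmetric])
  also have "?G * shift j = shift j * ?G"
    using shift_commute by (intro mat_prod_commute[symmetric]) auto
  also have "(shift j * ?G) * ?H = shift j * (?G * ?H)"
    by (rule assoc_mult_mat[OF shift_carrier G H])
  also have "?G * ?H = mat_prod (Suc d) shift ?ks"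
    using j by (simp add: filter_neq_upt mat_prod_append)
  finally have "shift j * mat_prod (Suc d) shift ?ks = 0\<^sub>m (Suc d) (Suc d)" by (rule sym)
  then have zero: "shift j * E j = 0\<^sub>m (Suc d) (Suc d)"
    using mat_prod_carrier[of ?ks shift]
    by (simp add: E_eq_smult_mat_prod mult_smult_distrib[of _ "Suc d" "Suc d" _ "Suc d"])
  have "shift j * E j = M * E j - (\<mu> j \<cdot>\<^sub>m 1\<^sub>m (Suc d)) * E j"
    by (rule minus_mult_distrib_mat[OF carrier _ E_carrier]) simp
  also have "(\<mu> j \<cdot>\<^sub>m 1\<^sub>m (Suc d)) * E j = \<mu> j \<cdot>\<^sub>m E j"
    using mult_smult_assoc_mat[of "1\<^sub>m (Suc d)" "Suc d" "Suc d" "E j" "Suc d" "\<mu> j"]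
    by (simp add: left_mult_one_mat[OF E_carrier])
  finally have "M * E j - \<mu> j \<cdot>\<^sub>m E j = 0\<^sub>m (Suc d) (Suc d)"
    by (simp only: zero)
  then show ?thesis
    by (rule eq_of_minus_eq_zero_mat[of _ "Suc d" "Suc d", rotated 2]) (use carrier in auto)
qed

lemma E_eigen': "j \<le> d \<Longrightarrow> E j * M = \<mu> j \<cdot>\<^sub>m E j"
  using E_eigen E_commute by simp

lemma E_mult_E:
  assumes j: "j \<le> d" and k: "k \<le> d"
  shows "E k * E j = (if k = j then E j else 0\<^sub>m (Suc d) (Suc d))"
proof -
  let ?ks = "filter (\<lambda>l. l \<noteq> k) [0..<Suc d]"
  have "E k * E j = prod_list (map (\<lambda>l. 1 / (\<mu> k - \<mu> l) * (\<mu> j - \<mu> l)) ?ks) \<cdot>\<^sub>m E j"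
    unfolding prim_idem_def[of d M \<mu> k]
    by (fold mat_prod_def) (rule mat_prod_shifts_mult_eigen[OF carrier E_carrier E_eigen[OF j]])
  also have "prod_list (map (\<lambda>l. 1 / (\<mu> k - \<mu> l) * (\<mu> j - \<mu> l)) ?ks) = (if k = j then 1 else 0)"
  proof (cases "k = j")
    case True
    have "prod_list (map (\<lambda>l. 1 / (\<mu> k - \<mu> l) * (\<mu> j - \<mu> l)) ?ks) = 1"
      by (rule prod_list_map_eq_one) (use k True distinct in \<open>auto dest: inj_onD\<close>)
    then show ?thesis by (simp only: if_P[OF True])
  next
    case False
    then show ?thesis
      by (simp add: prod_list_zero_iff) (rule rev_image_eqI[of j]; use j False in simp)
  qed
  finally show ?thesis
    using carrier_matD[OF E_carrier[of j]] by (cases "k = j") (auto simp: one_smult_mat intro!: eq_matI)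
qed

lemma E_idem: "j \<le> d \<Longrightarrow> E j * E j = E j"
  using E_mult_E by simp

end

section \<open>Rank-one idempotents\<close>

lemma mult_mat_unit_mult_index:
  fixes A B :: "'a::comm_ring_1 mat"
  assumes A: "A \<in> carrier_mat n n" and B: "B \<in> carrier_mat n n"
    and a: "a < n" and b: "b < n" and r: "r < n" and s: "s < n"
  shows "(A * mat n n (\<lambda>(i,j). if i = b \<and> j = a then 1 else 0) * B) $$ (r,s) = A $$ (r,b) * B $$ (a,s)"
proof -
  let ?U = "mat n n (\<lambda>(i,j). if i = b \<and> j = a then 1 else 0) :: 'a mat"
  have U: "?U \<in> carrier_mat n n" by simp
  have AU: "(A * ?U) $$ (r,t) = (if t = a then A $$ (r,b) else 0)" if "t < n" for t
  proof -
    have "(A * ?U) $$ (r,t) = (\<Sum>k<n. A $$ (r,k) * ?U $$ (k,t))"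
      using r that by (intro index_mult_mat_sum[OF A U])
    also have "\<dots> = (\<Sum>k<n. if k = b then (if t = a then A $$ (r,b) else 0) else 0)"
      using that by (intro sum.cong) auto
    finally show ?thesis using b by simp
  qed
  have "(A * ?U * B) $$ (r,s) = (\<Sum>t<n. (A * ?U) $$ (r,t) * B $$ (t,s))"
    using r s by (intro index_mult_mat_sum[OF mult_carrier_mat[OF A U] B])
  also have "\<dots> = (\<Sum>t<n. if t = a then A $$ (r,b) * B $$ (a,s) else 0)"
    by (intro sum.cong) (auto simp: AU)
  finally show ?thesis using a by simp
qed

text \<open>For a nonzero idempotent \<open>E\<close>, the corner \<open>E * X * E\<close> of every matrix is a multiple of
  \<open>E\<close> exactly when \<open>E\<close> has rank one.\<close>

definition scalar_corner :: "nat \<Rightarrow> 'a::field mat \<Rightarrow> bool" where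
  "scalar_corner n E \<longleftrightarrow> (\<forall>X \<in> carrier_mat n n. \<exists>c. E * X * E = c \<cdot>\<^sub>m E)"

lemma scalar_corner_transpose:
  assumes E: "E \<in> carrier_mat n n" and corner: "scalar_corner n E"
  shows "scalar_corner n (transpose_mat E)"
  unfolding scalar_corner_def
proof
  fix X :: "'a mat" assume X: "X \<in> carrier_mat n n"
  have "transpose_mat X \<in> carrier_mat n n" using X by simp
  then obtain c where c: "E * transpose_mat X * E = c \<cdot>\<^sub>m E"
    using corner unfolding scalar_corner_def by blast
  have "transpose_mat E * X * transpose_mat E = transpose_mat (E * transpose_mat X * E)"
    using E X by (simp add: transpose_mult[of _ n n _ n])
  also have "\<dots> = c \<cdot>\<^sub>m transpose_mat E" by (simp add: c transpose_smult_mat)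
  finally show "\<exists>c. transpose_mat E * X * transpose_mat E = c \<cdot>\<^sub>m transpose_mat E" ..
qed

lemma scalar_corner_alg_iso:
  assumes f: "alg_iso n f" and E: "E \<in> carrier_mat n n" and corner: "scalar_corner n (f E)"
  shows "scalar_corner n E"
  unfolding scalar_corner_def
proof
  fix X :: "'a mat" assume X: "X \<in> carrier_mat n n"
  obtain c where c: "f E * f X * f E = c \<cdot>\<^sub>m f E"
    using corner alg_iso_carrier[OF f X] unfolding scalar_corner_def by auto
  have "f (E * X * E) = f E * f X * f E"
    using E X by (simp only: alg_iso_mult[OF f] mult_carrier_mat)
  also have "\<dots> = f (c \<cdot>\<^sub>m E)"
    using E by (simp only: c alg_iso_smult[OF f])
  finally have "f (E * X * E) = f (c \<cdot>\<^sub>m E)" .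
  then have "E * X * E = c \<cdot>\<^sub>m E"
    using E X by (simp add: alg_iso_eq_iff[OF f])
  then show "\<exists>c. E * X * E = c \<cdot>\<^sub>m E" ..
qed

lemma scalar_corner_mat_tr_eq_1:
  fixes E :: "'a::field mat"
  assumes E: "E \<in> carrier_mat n n" and idem: "E * E = E" and nonzero: "E \<noteq> 0\<^sub>m n n"
    and corner: "scalar_corner n E"
  shows "mat_tr E = 1"
proof -
  obtain a b where a: "a < n" and b: "b < n" and ab: "E $$ (a,b) \<noteq> 0"
    using nonzero mat_eq_zeroI[OF E] by blast
  define U :: "'a mat" where "U = mat n n (\<lambda>(r,s). if r = b \<and> s = a then 1 else 0)"
  have U: "U \<in> carrier_mat n n" unfolding U_def by simp
  have EUE: "(E * U * E) $$ (r,s) = E $$ (r,b) * E $$ (a,s)" if "r < n" "s < n" for r s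
    unfolding U_def using a b that by (rule mult_mat_unit_mult_index[OF E E])
  obtain c where c: "E * U * E = c \<cdot>\<^sub>m E"
    using corner U unfolding scalar_corner_def by auto
  have "E $$ (a,b) * E $$ (a,b) = (c \<cdot>\<^sub>m E) $$ (a,b)"
    by (simp only: EUE[OF a b, symmetric] c)
  then have "E $$ (a,b) * E $$ (a,b) = c * E $$ (a,b)"
    using E a b by simp
  then have c_eq: "c = E $$ (a,b)" using ab by auto
  have "c * mat_tr E = (\<Sum>r<n. c * E $$ (r,r))"
    unfolding mat_tr_def using E by (simp add: sum_distrib_left)
  also have "\<dots> = (\<Sum>r<n. E $$ (a,r) * E $$ (r,b))"
  proof (rule sum.cong)
    fix r assume "r \<in> {..<n}"
    then have r: "r < n" by simp
    have "c * E $$ (r,r) = (E * U * E) $$ (r,r)" using c E r by simp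
    then show "c * E $$ (r,r) = E $$ (a,r) * E $$ (r,b)" using EUE[OF r r] by (simp add: mult.commute)
  qed simp
  also have "\<dots> = (E * E) $$ (a,b)" by (rule index_mult_mat_sum[OF E E a b, symmetric])
  also have "\<dots> = c" using idem c_eq by simp
  finally show ?thesis using ab c_eq by simp
qed

lemma scalar_corner_mat_tr:
  fixes E :: "'a::field mat"
  assumes E: "E \<in> carrier_mat n n" and idem: "E * E = E" and nonzero: "E \<noteq> 0\<^sub>m n n"
    and corner: "scalar_corner n E" and X: "X \<in> carrier_mat n n"
  shows "E * X * E = mat_tr (X * E) \<cdot>\<^sub>m E"
proof -
  obtain c where c: "E * X * E = c \<cdot>\<^sub>m E"
    using corner X unfolding scalar_corner_def by auto
  have "mat_tr (E * X * E) = mat_tr (E * (E * X))"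
    by (rule mat_tr_mult_commute) (use E X in auto)
  also have "E * (E * X) = E * X"
    using E X idem by (simp flip: assoc_mult_mat[OF E E X])
  also have "mat_tr (E * X) = mat_tr (X * E)"
    by (rule mat_tr_mult_commute[OF E X])
  finally have "mat_tr (X * E) = mat_tr (E * X * E)" ..
  also have "\<dots> = c"
    using c E scalar_corner_mat_tr_eq_1[OF E idem nonzero corner] by (simp add: mat_tr_smult)
  finally show ?thesis using c by simp
qed

lemma mat_tr_rank_one_product:
  fixes A E E' F :: "'a::comm_ring_1 mat"
  assumes carrier: "A \<in> carrier_mat n n" "E \<in> carrier_mat n n" "E' \<in> carrier_mat n n"
      "F \<in> carrier_mat n n"
    and E: "E * F * E = mat_tr (F * E) \<cdot>\<^sub>m E" and E': "E' * F * E' = mat_tr (F * E') \<cdot>\<^sub>m E'"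
    and F: "F * (E * A * E') * F = mat_tr (F * (E * A * E')) \<cdot>\<^sub>m F"
  shows "mat_tr (E * A * E' * A) * mat_tr (F * E) * mat_tr (F * E')
    = mat_tr (F * (E * A * E')) * mat_tr (F * (E' * A * E))"
proof -
  have assoc: "X * Y * Z = X * (Y * Z)"
    if "X \<in> carrier_mat n n" "Y \<in> carrier_mat n n" "Z \<in> carrier_mat n n" for X Y Z :: "'a mat"
    using that by simp
  have smult: "(c \<cdot>\<^sub>m X) * Y = c \<cdot>\<^sub>m (X * Y)" "X * (c \<cdot>\<^sub>m Y) = c \<cdot>\<^sub>m (X * Y)"
    if "X \<in> carrier_mat n n" "Y \<in> carrier_mat n n" for X Y :: "'a mat" and c
    using that by (simp_all add: mult_smult_assoc_mat[of _ n n _ n] mult_smult_distrib[of _ n n _ n])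
  let ?Z = "E * A * E'" and ?Z' = "E' * A * E"
  have "F * ?Z * F * ?Z' = mat_tr (F * ?Z) \<cdot>\<^sub>m (F * ?Z')"
    using carrier by (simp only: F) (simp add: smult)
  then have "mat_tr (F * ?Z * F * ?Z') = mat_tr (F * ?Z) * mat_tr (F * ?Z')"
    using carrier by (simp add: mat_tr_smult[of _ n])
  also have "F * ?Z * F * ?Z' = (F * E * A * E' * F * E' * A) * E"
    using carrier by (simp add: assoc)
  also have "mat_tr \<dots> = mat_tr (E * (F * E * A * E' * F * E' * A))"
    using carrier by (intro mat_tr_mult_commute) auto
  also have "E * (F * E * A * E' * F * E' * A) = (E * F * E) * A * (E' * F * E') * A"
    using carrier by (simp add: assoc)
  also have "mat_tr \<dots> = mat_tr (F * E) * mat_tr (F * E') * mat_tr (E * A * E' * A)"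
    using carrier by (simp add: E E' smult assoc mat_tr_smult[of _ n])
  finally show ?thesis by (simp add: mult_ac)
qed

lemma upper_bidiag_carrier[simp]: "upper_bidiag d \<delta> \<sigma> \<in> carrier_mat (Suc d) (Suc d)"
  and lower_bidiag_carrier[simp]: "lower_bidiag d \<delta> \<in> carrier_mat (Suc d) (Suc d)"
  by (simp_all add: upper_bidiag_def lower_bidiag_def)

lemma upper_bidiag_index:
  "r \<le> d \<Longrightarrow> c \<le> d \<Longrightarrow>
    upper_bidiag d \<delta> \<sigma> $$ (r,c) = (if r = c then \<delta> r else if c = Suc r then \<sigma> c else 0)"
  unfolding upper_bidiag_def by simp

lemma lower_bidiag_index:
  "r \<le> d \<Longrightarrow> c \<le> d \<Longrightarrow>
    lower_bidiag d \<delta> $$ (r,c) = (if r = c then \<delta> r else if r = Suc c then 1 else 0)"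
  unfolding lower_bidiag_def by simp

lemma transpose_lower_bidiag: "transpose_mat (lower_bidiag d \<delta>) = upper_bidiag d \<delta> (\<lambda>_. 1)"
  by (rule eq_matI) (auto simp: lower_bidiag_index upper_bidiag_index upper_bidiag_def lower_bidiag_def)

lemma upper_triangular_upper_bidiag: "upper_triangular (upper_bidiag d \<delta> \<sigma>)"
  by (auto simp: upper_bidiag_def)

lemma upper_bidiag_annihilated:
  "mat_prod (Suc d) (\<lambda>k. upper_bidiag d \<delta> \<sigma> - \<delta> k \<cdot>\<^sub>m 1\<^sub>m (Suc d)) [0..<Suc d] = 0\<^sub>m (Suc d) (Suc d)"
  by (rule upper_triangular_annihilated) (auto simp: upper_triangular_upper_bidiag upper_bidiag_index)

lemma lower_bidiag_rev_annihilated: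
  "mat_prod (Suc d) (\<lambda>k. lower_bidiag d (\<lambda>r. \<delta> (d - r)) - \<delta> k \<cdot>\<^sub>m 1\<^sub>m (Suc d)) [0..<Suc d]
    = 0\<^sub>m (Suc d) (Suc d)"
  by (rule lower_triangular_annihilated)
    (auto simp: transpose_lower_bidiag upper_triangular_upper_bidiag lower_bidiag_index)

lemma upper_bidiag_mult_index:
  fixes \<delta> \<sigma> :: "nat \<Rightarrow> 'a::field"
  assumes P: "P \<in> carrier_mat (Suc d) m" and r: "r \<le> d" and c: "c < m"
  shows "(upper_bidiag d \<delta> \<sigma> * P) $$ (r,c)
    = \<delta> r * P $$ (r,c) + (if r < d then \<sigma> (Suc r) * P $$ (Suc r, c) else 0)"
proof -
  have "(upper_bidiag d \<delta> \<sigma> * P) $$ (r,c) = (\<Sum>k<Suc d. upper_bidiag d \<delta> \<sigma> $$ (r,k) * P $$ (k,c))"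
    using r c by (intro index_mult_mat_sum[OF upper_bidiag_carrier P]) auto
  also have "\<dots> = (\<Sum>k<Suc d. (if k = r then \<delta> r * P $$ (r,c) else 0)
      + (if k = Suc r then \<sigma> (Suc r) * P $$ (Suc r, c) else 0))"
    using r by (intro sum.cong) (auto simp: upper_bidiag_index)
  finally show ?thesis using r by (simp add: sum.distrib)
qed

lemma mult_upper_bidiag_index:
  fixes \<delta> \<sigma> :: "nat \<Rightarrow> 'a::field"
  assumes P: "P \<in> carrier_mat m (Suc d)" and r: "r < m" and c: "c \<le> d"
  shows "(P * upper_bidiag d \<delta> \<sigma>) $$ (r,c)
    = P $$ (r,c) * \<delta> c + (if 0 < c then P $$ (r, c - 1) * \<sigma> c else 0)"
proof -
  have "(P * upper_bidiag d \<delta> \<sigma>) $$ (r,c) = (\<Sum>k<Suc d. P $$ (r,k) * upper_bidiag d \<delta> \<sigma> $$ (k,c))"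
    using r c by (intro index_mult_mat_sum[OF P upper_bidiag_carrier]) auto
  also have "\<dots> = (\<Sum>k<Suc d. (if k = c then P $$ (r,c) * \<delta> c else 0)
      + (if k = c - 1 \<and> 0 < c then P $$ (r, c - 1) * \<sigma> c else 0))"
    using c by (intro sum.cong) (auto simp: upper_bidiag_index)
  finally show ?thesis using c by (auto simp: sum.distrib)
qed

lemma lower_bidiag_mult_index:
  fixes \<delta> :: "nat \<Rightarrow> 'a::field"
  assumes P: "P \<in> carrier_mat (Suc d) m" and r: "r \<le> d" and c: "c < m"
  shows "(lower_bidiag d \<delta> * P) $$ (r,c) = \<delta> r * P $$ (r,c) + (if 0 < r then P $$ (r - 1, c) else 0)"
proof -
  have "(lower_bidiag d \<delta> * P) $$ (r,c) = (\<Sum>k<Suc d. lower_bidiag d \<delta> $$ (r,k) * P $$ (k,c))"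
    using r c by (intro index_mult_mat_sum[OF lower_bidiag_carrier P]) auto
  also have "\<dots> = (\<Sum>k<Suc d. (if k = r then \<delta> r * P $$ (r,c) else 0)
      + (if k = r - 1 \<and> 0 < r then P $$ (r - 1, c) else 0))"
    using r by (intro sum.cong) (auto simp: lower_bidiag_index)
  finally show ?thesis using r by (auto simp: sum.distrib)
qed

lemma mult_lower_bidiag_index:
  fixes \<delta> :: "nat \<Rightarrow> 'a::field"
  assumes P: "P \<in> carrier_mat m (Suc d)" and r: "r < m" and c: "c \<le> d"
  shows "(P * lower_bidiag d \<delta>) $$ (r,c) = P $$ (r,c) * \<delta> c + (if c < d then P $$ (r, Suc c) else 0)"
proof -
  have "(P * lower_bidiag d \<delta>) $$ (r,c) = (\<Sum>k<Suc d. P $$ (r,k) * lower_bidiag d \<delta> $$ (k,c))"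
    using r c by (intro index_mult_mat_sum[OF P lower_bidiag_carrier]) auto
  also have "\<dots> = (\<Sum>k<Suc d. (if k = c then P $$ (r,c) * \<delta> c else 0)
      + (if k = Suc c then P $$ (r, Suc c) else 0))"
    using c by (intro sum.cong) (auto simp: lower_bidiag_index)
  finally show ?thesis using c by (simp add: sum.distrib)
qed

locale upper_bidiag_eigen =
  fixes d :: nat and \<delta> \<sigma> :: "nat \<Rightarrow> 'a::field" and j :: nat and P :: "'a mat"
  assumes distinct: "inj_on \<delta> {0..d}" and \<sigma>_nonzero: "\<And>k. 1 \<le> k \<Longrightarrow> k \<le> d \<Longrightarrow> \<sigma> k \<noteq> 0"
    and j: "j \<le> d" and carrier: "P \<in> carrier_mat (Suc d) (Suc d)"
    and bidiag_mult: "upper_bidiag d \<delta> \<sigma> * P = \<delta> j \<cdot>\<^sub>m P"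
    and mult_bidiag: "P * upper_bidiag d \<delta> \<sigma> = \<delta> j \<cdot>\<^sub>m P"
begin

lemma \<delta>_neq: "k \<le> d \<Longrightarrow> k \<noteq> j \<Longrightarrow> \<delta> j - \<delta> k \<noteq> 0"
  using distinct j by (auto dest: inj_onD)

lemma column_recurrence:
  assumes "r \<le> d" "c \<le> d"
  shows "(\<delta> j - \<delta> r) * P $$ (r,c) = (if r < d then \<sigma> (Suc r) * P $$ (Suc r, c) else 0)"
proof -
  have "(upper_bidiag d \<delta> \<sigma> * P) $$ (r,c) = (\<delta> j \<cdot>\<^sub>m P) $$ (r,c)" by (simp add: bidiag_mult)
  then show ?thesis
    using upper_bidiag_mult_index[OF carrier, of r c \<delta> \<sigma>] carrier assms by (auto simp: algebra_simps)
qed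

lemma row_recurrence:
  assumes "r \<le> d" "c \<le> d"
  shows "(\<delta> j - \<delta> c) * P $$ (r,c) = (if 0 < c then P $$ (r, c - 1) * \<sigma> c else 0)"
proof -
  have "(P * upper_bidiag d \<delta> \<sigma>) $$ (r,c) = (\<delta> j \<cdot>\<^sub>m P) $$ (r,c)" by (simp add: mult_bidiag)
  then show ?thesis
    using mult_upper_bidiag_index[OF carrier, of r c \<delta> \<sigma>] carrier assms by (auto simp: algebra_simps)
qed

lemma zero_below: "j < r \<Longrightarrow> r \<le> d \<Longrightarrow> c \<le> d \<Longrightarrow> P $$ (r,c) = 0"
proof (induction "d - r" arbitrary: r)
  case 0
  then show ?case using column_recurrence[of r c] \<delta>_neq[of r] by simp
next
  case (Suc m)
  then have "r < d" and "P $$ (Suc r, c) = 0" by simp_all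
  then show ?case using column_recurrence[of r c] \<delta>_neq[of r] Suc.prems by simp
qed

lemma zero_left: "c < j \<Longrightarrow> r \<le> d \<Longrightarrow> P $$ (r,c) = 0"
proof (induction c)
  case 0
  then show ?case using row_recurrence[of r 0] \<delta>_neq[of 0] j by simp
next
  case (Suc c)
  then show ?case using row_recurrence[of r "Suc c"] \<delta>_neq[of "Suc c"] j by simp
qed

lemma column_prod:
  "r \<le> j \<Longrightarrow> c \<le> d \<Longrightarrow>
    P $$ (r,c) * (\<Prod>k\<in>{r..<j}. \<delta> j - \<delta> k) = (\<Prod>k\<in>{Suc r..j}. \<sigma> k) * P $$ (j,c)"
proof (induction "j - r" arbitrary: r)
  case 0
  then show ?case by simp
next
  case (Suc m)
  then have r: "r < j" by simp
  have IH: "P $$ (Suc r, c) * (\<Prod>k\<in>{Suc r..<j}. \<delta> j - \<delta> k) = (\<Prod>k\<in>{Suc (Suc r)..j}. \<sigma> k) * P $$ (j,c)"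
    using Suc r by simp
  have "P $$ (r,c) * (\<Prod>k\<in>{r..<j}. \<delta> j - \<delta> k)
      = ((\<delta> j - \<delta> r) * P $$ (r,c)) * (\<Prod>k\<in>{Suc r..<j}. \<delta> j - \<delta> k)"
    using r by (simp add: prod.atLeast_Suc_lessThan mult_ac)
  also have "\<dots> = \<sigma> (Suc r) * (P $$ (Suc r, c) * (\<Prod>k\<in>{Suc r..<j}. \<delta> j - \<delta> k))"
    using column_recurrence[of r c] r j Suc.prems by (simp add: mult_ac)
  also have "\<dots> = (\<Prod>k\<in>{Suc r..j}. \<sigma> k) * P $$ (j,c)"
    using r by (simp add: IH prod.atLeast_Suc_atMost mult_ac)
  finally show ?case .
qed

lemma row_prod:
  "j \<le> c \<Longrightarrow> c \<le> d \<Longrightarrow> r \<le> d \<Longrightarrow>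
    P $$ (r,c) * (\<Prod>k\<in>{Suc j..c}. \<delta> j - \<delta> k) = (\<Prod>k\<in>{Suc j..c}. \<sigma> k) * P $$ (r,j)"
proof (induction c)
  case 0
  then show ?case by simp
next
  case (Suc c)
  show ?case
  proof (cases "j = Suc c")
    case True
    then show ?thesis by simp
  next
    case False
    then have c: "j \<le> c" using Suc by simp
    have "P $$ (r, Suc c) * (\<Prod>k\<in>{Suc j..Suc c}. \<delta> j - \<delta> k)
        = ((\<delta> j - \<delta> (Suc c)) * P $$ (r, Suc c)) * (\<Prod>k\<in>{Suc j..c}. \<delta> j - \<delta> k)"
      using c by (simp add: prod.cl_ivl_Suc mult_ac)
    also have "\<dots> = \<sigma> (Suc c) * (P $$ (r,c) * (\<Prod>k\<in>{Suc j..c}. \<delta> j - \<delta> k))"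
      using row_recurrence[of r "Suc c"] Suc.prems by (simp add: mult_ac)
    also have "\<dots> = (\<Prod>k\<in>{Suc j..Suc c}. \<sigma> k) * P $$ (r,j)"
      using Suc c by (simp add: prod.cl_ivl_Suc mult_ac)
    finally show ?thesis .
  qed
qed

lemma \<delta>_prod_nonzero: "(\<Prod>k\<in>{r..<j}. \<delta> j - \<delta> k) \<noteq> 0" "(\<Prod>k\<in>{Suc j..c}. \<delta> j - \<delta> k) \<noteq> 0"
  if "c \<le> d"
  using \<delta>_neq that j by (auto simp: prod_zero_iff)

lemma \<sigma>_prod_nonzero: "(\<Prod>k\<in>{Suc r..j}. \<sigma> k) \<noteq> 0" "(\<Prod>k\<in>{Suc j..c}. \<sigma> k) \<noteq> 0"
  if "c \<le> d"
  using \<sigma>_nonzero that j by (auto simp: prod_zero_iff)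

lemma entry_mult_pivot:
  assumes r: "r \<le> d" and c: "c \<le> d"
  shows "P $$ (r,c) * P $$ (j,j) = P $$ (r,j) * P $$ (j,c)"
proof (cases "r \<le> j")
  case True
  let ?D = "\<Prod>k\<in>{r..<j}. \<delta> j - \<delta> k" and ?S = "\<Prod>k\<in>{Suc r..j}. \<sigma> k"
  have "?D * (P $$ (r,c) * P $$ (j,j)) = ?S * P $$ (j,c) * P $$ (j,j)"
    using column_prod[OF True c] by (simp add: mult_ac)
  also have "\<dots> = ?D * (P $$ (r,j) * P $$ (j,c))"
    using column_prod[OF True j] by (simp add: mult_ac)
  finally show ?thesis using \<delta>_prod_nonzero(1)[OF c] by simp
next
  case False
  then show ?thesis using zero_below r c j by simp
qed

end

locale upper_bidiag_idem = upper_bidiag_eigen +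
  assumes idem: "P * P = P" and nonzero: "P \<noteq> 0\<^sub>m (Suc d) (Suc d)"
begin

lemma pivot_nonzero: "P $$ (j,j) \<noteq> 0"
proof
  assume pivot: "P $$ (j,j) = 0"
  have row: "P $$ (j,c) = 0" if c: "c \<le> d" for c
  proof (cases "c < j")
    case True
    then show ?thesis using zero_left j by simp
  next
    case False
    then show ?thesis using row_prod[of c j] \<delta>_prod_nonzero(2)[OF c] c j pivot by simp
  qed
  have "P $$ (r,c) = 0" if r: "r \<le> d" and c: "c \<le> d" for r c
  proof (cases "r \<le> j")
    case True
    then show ?thesis using column_prod[OF True c] row[OF c] \<delta>_prod_nonzero(1)[OF c] by simp
  next
    case False
    then show ?thesis using zero_below r c by simp
  qed
  then have "P = 0\<^sub>m (Suc d) (Suc d)" by (intro mat_eq_zeroI[OF carrier]) auto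
  then show False using nonzero by simp
qed

lemma pivot: "P $$ (j,j) = 1"
proof -
  have "P $$ (j,j) = (P * P) $$ (j,j)" using idem by simp
  also have "\<dots> = (\<Sum>k<Suc d. P $$ (j,k) * P $$ (k,j))"
    using j by (intro index_mult_mat_sum[OF carrier carrier]) auto
  also have "\<dots> = (\<Sum>k<Suc d. if k = j then P $$ (j,j) * P $$ (j,j) else 0)"
  proof (rule sum.cong[OF refl])
    fix k assume "k \<in> {..<Suc d}"
    then show "P $$ (j,k) * P $$ (k,j) = (if k = j then P $$ (j,j) * P $$ (j,j) else 0)"
      using zero_left[of k j] zero_below[of k j] j by (cases k j rule: linorder_cases) auto
  qed
  also have "\<dots> = P $$ (j,j) * P $$ (j,j)"
    by (subst sum.delta) (use j in auto)
  finally have "P $$ (j,j) = P $$ (j,j) * P $$ (j,j)" .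
  then show ?thesis using pivot_nonzero by simp
qed

lemma entry_factor: "r \<le> d \<Longrightarrow> c \<le> d \<Longrightarrow> P $$ (r,c) = P $$ (r,j) * P $$ (j,c)"
  using entry_mult_pivot pivot by simp

lemma mult_row_factor:
  assumes Y: "Y \<in> carrier_mat (Suc d) m" and r: "r \<le> d" and c: "c < m"
  shows "(P * Y) $$ (r,c) = P $$ (r,j) * (P * Y) $$ (j,c)"
proof -
  have "(P * Y) $$ (r,c) = (\<Sum>k<Suc d. P $$ (r,k) * Y $$ (k,c))"
    using r c by (intro index_mult_mat_sum[OF carrier Y]) auto
  also have "\<dots> = (\<Sum>k<Suc d. P $$ (r,j) * (P $$ (j,k) * Y $$ (k,c)))"
    using entry_factor[OF r] by (intro sum.cong) auto
  also have "\<dots> = P $$ (r,j) * (\<Sum>k<Suc d. P $$ (j,k) * Y $$ (k,c))"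
    by (rule sum_distrib_left[symmetric])
  also have "(\<Sum>k<Suc d. P $$ (j,k) * Y $$ (k,c)) = (P * Y) $$ (j,c)"
    using j c by (intro index_mult_mat_sum[OF carrier Y, symmetric]) auto
  finally show ?thesis .
qed

lemma mult_col_factor:
  assumes Y: "Y \<in> carrier_mat m (Suc d)" and r: "r < m" and c: "c \<le> d"
  shows "(Y * P) $$ (r,c) = (Y * P) $$ (r,j) * P $$ (j,c)"
proof -
  have "(Y * P) $$ (r,c) = (\<Sum>k<Suc d. Y $$ (r,k) * P $$ (k,c))"
    using r c by (intro index_mult_mat_sum[OF Y carrier]) auto
  also have "\<dots> = (\<Sum>k<Suc d. Y $$ (r,k) * P $$ (k,j) * P $$ (j,c))"
    using entry_factor[OF _ c] by (intro sum.cong) auto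
  also have "\<dots> = (\<Sum>k<Suc d. Y $$ (r,k) * P $$ (k,j)) * P $$ (j,c)"
    by (rule sum_distrib_right[symmetric])
  also have "(\<Sum>k<Suc d. Y $$ (r,k) * P $$ (k,j)) = (Y * P) $$ (r,j)"
    using j r by (intro index_mult_mat_sum[OF Y carrier, symmetric]) auto
  finally show ?thesis .
qed

lemma scalar_corner: "scalar_corner (Suc d) P"
  unfolding scalar_corner_def
proof
  fix X :: "'a mat" assume X: "X \<in> carrier_mat (Suc d) (Suc d)"
  have "P * X * P = (P * X * P) $$ (j,j) \<cdot>\<^sub>m P"
  proof (rule eq_matI)
    fix r c assume "r < dim_row ((P * X * P) $$ (j,j) \<cdot>\<^sub>m P)" "c < dim_col ((P * X * P) $$ (j,j) \<cdot>\<^sub>m P)"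
    then have r: "r \<le> d" and c: "c \<le> d" using carrier by auto
    let ?Z = "P * X * P"
    have Z: "?Z = P * (X * P)" by (rule assoc_mult_mat[OF carrier X carrier])
    have "?Z $$ (r,c) = P $$ (r,j) * ?Z $$ (j,c)"
      unfolding Z using X r c carrier by (intro mult_row_factor) auto
    also have "?Z $$ (j,c) = ?Z $$ (j,j) * P $$ (j,c)"
      using X c j carrier by (intro mult_col_factor) auto
    finally show "?Z $$ (r,c) = (?Z $$ (j,j) \<cdot>\<^sub>m P) $$ (r,c)"
      using r c carrier entry_factor[OF r c] by (simp del: index_mult_mat assoc_mult_mat add: mult_ac)
  qed (use carrier in auto)
  then show "\<exists>c. P * X * P = c \<cdot>\<^sub>m P" ..
qed

lemma first_row_pivot: "P $$ (0,j) * (\<Prod>k<j. \<delta> j - \<delta> k) = (\<Prod>k\<in>{1..j}. \<sigma> k)"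
  using column_prod[of 0 j] pivot j by (simp add: atLeast0LessThan)

lemma last_col_pivot: "P $$ (j,d) * (\<Prod>k\<in>{j<..d}. \<delta> j - \<delta> k) = (\<Prod>k\<in>{j<..d}. \<sigma> k)"
  using row_prod[of d j] pivot j by (simp add: atLeastSucAtMost_greaterThanAtMost)

lemma first_row_pivot_nonzero: "P $$ (0,j) \<noteq> 0"
  using first_row_pivot \<sigma>_prod_nonzero(1)[of d 0] by auto

lemma last_col_pivot_nonzero: "P $$ (j,d) \<noteq> 0"
  using last_col_pivot \<sigma>_prod_nonzero(2)[of d] by (auto simp: atLeastSucAtMost_greaterThanAtMost)


lemma pivot_row_mult_lower_bidiag:
  assumes Y: "Y \<in> carrier_mat (Suc d) m" and j0: "0 < j" and c: "c < m"
    and Y0: "\<And>r. j \<le> r \<Longrightarrow> r \<le> d \<Longrightarrow> Y $$ (r,c) = 0"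
  shows "(P * (lower_bidiag d \<delta>' * Y)) $$ (j,c) = Y $$ (j - 1, c)"
proof -
  have LY: "(lower_bidiag d \<delta>' * Y) $$ (k,c)
      = \<delta>' k * Y $$ (k,c) + (if 0 < k then Y $$ (k - 1, c) else 0)"
    if "k \<le> d" for k
    using that by (intro lower_bidiag_mult_index[OF Y _ c])
  have "(P * (lower_bidiag d \<delta>' * Y)) $$ (j,c)
      = (\<Sum>k<Suc d. P $$ (j,k) * (lower_bidiag d \<delta>' * Y) $$ (k,c))"
    using j c by (intro index_mult_mat_sum[OF carrier mult_carrier_mat[OF lower_bidiag_carrier Y]]) auto
  also have "\<dots> = (\<Sum>k<Suc d. if k = j then Y $$ (j - 1, c) else 0)"
  proof (rule sum.cong[OF refl])
    fix k assume k: "k \<in> {..<Suc d}"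
    show "P $$ (j,k) * (lower_bidiag d \<delta>' * Y) $$ (k,c) = (if k = j then Y $$ (j - 1, c) else 0)"
    proof (cases k j rule: linorder_cases)
      case less
      then show ?thesis using zero_left[of k j] j by simp
    next
      case equal
      then show ?thesis using LY[of j] Y0[of j] pivot j j0 by simp
    next
      case greater
      then show ?thesis using LY[of k] Y0[of k] Y0[of "k - 1"] k by simp
    qed
  qed
  also have "\<dots> = Y $$ (j - 1, c)" by (subst sum.delta) (use j in auto)
  finally show ?thesis .
qed

lemma mult_lower_bidiag_pivot_col:
  assumes Y: "Y \<in> carrier_mat m (Suc d)" and jd: "j < d" and r: "r < m"
    and Y0: "\<And>c. c \<le> j \<Longrightarrow> Y $$ (r,c) = 0"
  shows "(Y * lower_bidiag d \<delta>' * P) $$ (r,j) = Y $$ (r, Suc j)"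
proof -
  have YL: "(Y * lower_bidiag d \<delta>') $$ (r,k)
      = Y $$ (r,k) * \<delta>' k + (if k < d then Y $$ (r, Suc k) else 0)"
    if "k \<le> d" for k
    using that by (intro mult_lower_bidiag_index[OF Y r])
  have "(Y * lower_bidiag d \<delta>' * P) $$ (r,j)
      = (\<Sum>k<Suc d. (Y * lower_bidiag d \<delta>') $$ (r,k) * P $$ (k,j))"
    using j r by (intro index_mult_mat_sum[OF mult_carrier_mat[OF Y lower_bidiag_carrier] carrier]) auto
  also have "\<dots> = (\<Sum>k<Suc d. if k = j then Y $$ (r, Suc j) else 0)"
  proof (rule sum.cong[OF refl])
    fix k assume k: "k \<in> {..<Suc d}"
    show "(Y * lower_bidiag d \<delta>') $$ (r,k) * P $$ (k,j) = (if k = j then Y $$ (r, Suc j) else 0)"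
    proof (cases k j rule: linorder_cases)
      case less
      then show ?thesis using YL[of k] Y0[of k] Y0[of "Suc k"] jd by simp
    next
      case equal
      then show ?thesis using YL[of j] Y0[of j] pivot jd by simp
    next
      case greater
      then show ?thesis using zero_below[of k j] k j by simp
    qed
  qed
  also have "\<dots> = Y $$ (r, Suc j)" by (subst sum.delta) (use j in auto)
  finally show ?thesis .
qed

end

lemma upper_bidiag_idem_transpose:
  fixes \<delta> :: "nat \<Rightarrow> 'a::field"
  assumes distinct: "inj_on \<delta> {0..d}" and j: "j \<le> d" and Q: "Q \<in> carrier_mat (Suc d) (Suc d)"
    and LQ: "lower_bidiag d \<delta> * Q = \<delta> j \<cdot>\<^sub>m Q" and QL: "Q * lower_bidiag d \<delta> = \<delta> j \<cdot>\<^sub>m Q"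
    and idem: "Q * Q = Q" and nonzero: "Q \<noteq> 0\<^sub>m (Suc d) (Suc d)"
  shows "upper_bidiag_idem d \<delta> (\<lambda>_. 1) j (transpose_mat Q)"
proof
  have "upper_bidiag d \<delta> (\<lambda>_. 1) * transpose_mat Q = transpose_mat (Q * lower_bidiag d \<delta>)"
    using Q by (simp add: transpose_mult[of Q "Suc d" "Suc d" _ "Suc d"] transpose_lower_bidiag)
  then show "upper_bidiag d \<delta> (\<lambda>_. 1) * transpose_mat Q = \<delta> j \<cdot>\<^sub>m transpose_mat Q"
    by (simp add: QL transpose_smult_mat)
  have "transpose_mat Q * upper_bidiag d \<delta> (\<lambda>_. 1) = transpose_mat (lower_bidiag d \<delta> * Q)"
    using Q by (simp add: transpose_mult[of _ "Suc d" "Suc d" Q "Suc d"] transpose_lower_bidiag)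
  then show "transpose_mat Q * upper_bidiag d \<delta> (\<lambda>_. 1) = \<delta> j \<cdot>\<^sub>m transpose_mat Q"
    by (simp add: LQ transpose_smult_mat)
  show "transpose_mat Q * transpose_mat Q = transpose_mat Q"
    using Q idem by (simp flip: transpose_mult[of Q "Suc d" "Suc d" Q "Suc d"])
  show "transpose_mat Q \<noteq> 0\<^sub>m (Suc d) (Suc d)"
    using nonzero by (metis transpose_transpose zero_transpose_mat)
qed (use distinct j Q in auto)

lemma upper_bidiag_idems_annihilate:
  assumes P: "\<And>k. k \<le> d \<Longrightarrow> upper_bidiag_idem d \<delta> \<sigma> k (P k)"
    and Y: "Y \<in> carrier_mat (Suc d) m" and PY: "\<And>k. k \<le> d \<Longrightarrow> P k * Y = 0\<^sub>m (Suc d) m"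
  shows "Y = 0\<^sub>m (Suc d) m"
proof -
  have "Y $$ (k,c) = 0" if "k \<le> d" "c < m" for k c
    using that
  proof (induction "d - k" arbitrary: k rule: less_induct)
    case less
    interpret upper_bidiag_idem d \<delta> \<sigma> k "P k" using P[OF less.prems(1)] .
    have "0 = (P k * Y) $$ (k,c)" using PY[OF less.prems(1)] less.prems by simp
    also have "\<dots> = (\<Sum>r<Suc d. P k $$ (k,r) * Y $$ (r,c))"
      using less.prems by (intro index_mult_mat_sum[OF carrier Y]) auto
    also have "\<dots> = (\<Sum>r<Suc d. if r = k then Y $$ (k,c) else 0)"
    proof (rule sum.cong[OF refl])
      fix r assume r: "r \<in> {..<Suc d}"
      show "P k $$ (k,r) * Y $$ (r,c) = (if r = k then Y $$ (k,c) else 0)"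
        using zero_left[of r k] pivot less.hyps[of r] less.prems r
        by (cases r k rule: linorder_cases) auto
    qed
    also have "\<dots> = Y $$ (k,c)" by (subst sum.delta) (use less.prems in auto)
    finally show ?case by simp
  qed
  then show ?thesis by (intro mat_eq_zeroI[OF Y]) auto
qed

section \<open>Leonard systems in split form\<close>

lemma eta_s_eq_prod: "j \<le> d \<Longrightarrow> eta_s d \<theta>s (d - j) x = (\<Prod>k\<in>{j<..d}. x - \<theta>s k)"
  unfolding eta_s_def by (rule prod.reindex_bij_witness[of _ "\<lambda>k. d - k" "\<lambda>h. d - h"]) auto

text \<open>\<open>f\<close> and \<open>g\<close> are the isomorphisms witnessing the first and the second split sequence;
  \<open>Es j\<close> is \<open>E\<^sup>*\<^sub>j\<close> and \<open>E0\<close> is \<open>E\<^sub>0\<close>.\<close>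

locale leonard_split =
  fixes d :: nat and A As :: "'a::field mat" and \<theta> \<theta>s \<phi> \<phi>' :: "nat \<Rightarrow> 'a"
    and f g :: "'a mat \<Rightarrow> 'a mat"
  assumes leonard: "leonard_system d A As \<theta> \<theta>s" and d_pos: "0 < d"
    and \<phi>_nonzero: "\<And>k. 1 \<le> k \<Longrightarrow> k \<le> d \<Longrightarrow> \<phi> k \<noteq> 0"
    and \<phi>'_nonzero: "\<And>k. 1 \<le> k \<Longrightarrow> k \<le> d \<Longrightarrow> \<phi>' k \<noteq> 0"
    and f: "alg_iso (Suc d) f" and f_A: "f A = lower_bidiag d \<theta>"
    and f_As: "f As = upper_bidiag d \<theta>s \<phi>"
    and g: "alg_iso (Suc d) g" and g_A: "g A = lower_bidiag d (\<lambda>r. \<theta> (d - r))"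
    and g_As: "g As = upper_bidiag d \<theta>s \<phi>'"
begin

abbreviation "Es \<equiv> prim_idem d As \<theta>s"
abbreviation "E0 \<equiv> prim_idem d A \<theta> 0"

lemma A_carrier[simp]: "A \<in> carrier_mat (Suc d) (Suc d)"
  and As_carrier[simp]: "As \<in> carrier_mat (Suc d) (Suc d)"
  and \<theta>_distinct: "inj_on \<theta> {0..d}"
  and \<theta>s_distinct: "inj_on \<theta>s {0..d}"
  using leonard unfolding leonard_system_def eigen_ordering_def by auto

lemma tridiagonal: "j \<le> d \<Longrightarrow> l \<le> d \<Longrightarrow> 1 < \<bar>int j - int l\<bar> \<Longrightarrow> Es j * A * Es l = 0\<^sub>m (Suc d) (Suc d)"
  using leonard unfolding leonard_system_def by blast

lemma As_annihilated:
  "mat_prod (Suc d) (\<lambda>k. As - \<theta>s k \<cdot>\<^sub>m 1\<^sub>m (Suc d)) [0..<Suc d] = 0\<^sub>m (Suc d) (Suc d)"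
proof -
  have "f (mat_prod (Suc d) (\<lambda>k. As - \<theta>s k \<cdot>\<^sub>m 1\<^sub>m (Suc d)) [0..<Suc d]) = f (0\<^sub>m (Suc d) (Suc d))"
    by (simp add: alg_iso_mat_prod[OF f] alg_iso_shift[OF f] f_As upper_bidiag_annihilated
        alg_iso_zero[OF f])
  then show ?thesis by (simp add: alg_iso_eq_iff[OF f] mat_prod_carrier)
qed

text \<open>The triangular argument kills the columns of a lower triangular matrix from the right, so
  it needs the diagonal \<open>\<theta>\<^sub>d, \<dots>, \<theta>\<^sub>0\<close>; this is what the second split basis provides.\<close>

lemma A_annihilated:
  "mat_prod (Suc d) (\<lambda>k. A - \<theta> k \<cdot>\<^sub>m 1\<^sub>m (Suc d)) [0..<Suc d] = 0\<^sub>m (Suc d) (Suc d)"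
proof -
  have "g (mat_prod (Suc d) (\<lambda>k. A - \<theta> k \<cdot>\<^sub>m 1\<^sub>m (Suc d)) [0..<Suc d]) = g (0\<^sub>m (Suc d) (Suc d))"
    by (simp add: alg_iso_mat_prod[OF g] alg_iso_shift[OF g] g_A lower_bidiag_rev_annihilated
        alg_iso_zero[OF g])
  then show ?thesis by (simp add: alg_iso_eq_iff[OF g] mat_prod_carrier)
qed

sublocale dual: distinct_annihilator d As \<theta>s
  using \<theta>s_distinct As_annihilated by unfold_locales simp_all

sublocale primal: distinct_annihilator d A \<theta>
  using \<theta>_distinct A_annihilated by unfold_locales simp_all

lemma Es_nonzero: "j \<le> d \<Longrightarrow> Es j \<noteq> 0\<^sub>m (Suc d) (Suc d)"
proof
  assume j: "j \<le> d" and zero: "Es j = 0\<^sub>m (Suc d) (Suc d)"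
  define l where "l = (if j < d then Suc j else j - 1)"
  have "l \<le> d" "\<bar>int j - int l\<bar> = 1" using j d_pos by (auto simp: l_def)
  then have "Es j * A * Es l \<noteq> 0\<^sub>m (Suc d) (Suc d)"
    using leonard j unfolding leonard_system_def by blast
  then show False
    by (simp add: zero left_mult_zero_mat[OF A_carrier] left_mult_zero_mat[OF dual.E_carrier])
qed

lemma E0_nonzero: "E0 \<noteq> 0\<^sub>m (Suc d) (Suc d)"
proof
  assume zero: "E0 = 0\<^sub>m (Suc d) (Suc d)"
  have "E0 * As * prim_idem d A \<theta> 1 \<noteq> 0\<^sub>m (Suc d) (Suc d)"
    using leonard d_pos unfolding leonard_system_def by fastforce
  then show False
    by (simp add: zero left_mult_zero_mat[OF As_carrier] left_mult_zero_mat[OF primal.E_carrier])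
qed

lemma f_Es: "j \<le> d \<Longrightarrow> upper_bidiag_idem d \<theta>s \<phi> j (f (Es j))"
  by unfold_locales
    (use \<theta>s_distinct \<phi>_nonzero Es_nonzero dual.E_idem in \<open>auto simp: alg_iso_carrier[OF f]
      f_As[symmetric] alg_iso_eigen[OF f] alg_iso_eigen'[OF f] dual.E_eigen dual.E_eigen'
      alg_iso_mult[OF f, symmetric] alg_iso_eq_zero_iff[OF f]\<close>)

lemma g_Es: "j \<le> d \<Longrightarrow> upper_bidiag_idem d \<theta>s \<phi>' j (g (Es j))"
  by unfold_locales
    (use \<theta>s_distinct \<phi>'_nonzero Es_nonzero dual.E_idem in \<open>auto simp: alg_iso_carrier[OF g]
      g_As[symmetric] alg_iso_eigen[OF g] alg_iso_eigen'[OF g] dual.E_eigen dual.E_eigen'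
      alg_iso_mult[OF g, symmetric] alg_iso_eq_zero_iff[OF g]\<close>)

lemma f_E0: "upper_bidiag_idem d \<theta> (\<lambda>_. 1) 0 (transpose_mat (f E0))"
  by (rule upper_bidiag_idem_transpose)
    (use \<theta>_distinct E0_nonzero primal.E_idem[of 0] in \<open>auto simp: alg_iso_carrier[OF f]
      f_A[symmetric] alg_iso_eigen[OF f] alg_iso_eigen'[OF f] primal.E_eigen primal.E_eigen'
      alg_iso_mult[OF f, symmetric] alg_iso_eq_zero_iff[OF f]\<close>)

lemma g_E0: "upper_bidiag_idem d (\<lambda>r. \<theta> (d - r)) (\<lambda>_. 1) d (transpose_mat (g E0))"
proof (rule upper_bidiag_idem_transpose)
  show "inj_on (\<lambda>r. \<theta> (d - r)) {0..d}"
  proof (rule inj_onI)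
    fix x y assume "x \<in> {0..d}" "y \<in> {0..d}" "\<theta> (d - x) = \<theta> (d - y)"
    then show "x = y" using inj_onD[OF \<theta>_distinct, of "d - x" "d - y"] by auto
  qed
qed (use E0_nonzero primal.E_idem[of 0] in \<open>auto simp: alg_iso_carrier[OF g]
      g_A[symmetric] alg_iso_eigen[OF g] alg_iso_eigen'[OF g] primal.E_eigen primal.E_eigen'
      alg_iso_mult[OF g, symmetric] alg_iso_eq_zero_iff[OF g]\<close>)

lemma Es_rank_one:
  "j \<le> d \<Longrightarrow> X \<in> carrier_mat (Suc d) (Suc d) \<Longrightarrow> Es j * X * Es j = mat_tr (X * Es j) \<cdot>\<^sub>m Es j"
  by (rule scalar_corner_mat_tr[OF dual.E_carrier dual.E_idem Es_nonzero
        scalar_corner_alg_iso[OF f dual.E_carrier upper_bidiag_idem.scalar_corner[OF f_Es]]])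

lemma E0_rank_one:
  "X \<in> carrier_mat (Suc d) (Suc d) \<Longrightarrow> E0 * X * E0 = mat_tr (X * E0) \<cdot>\<^sub>m E0"
proof (rule scalar_corner_mat_tr[OF primal.E_carrier primal.E_idem E0_nonzero _])
  have "scalar_corner (Suc d) (transpose_mat (transpose_mat (f E0)))"
    by (rule scalar_corner_transpose[OF _ upper_bidiag_idem.scalar_corner[OF f_E0]])
      (simp add: alg_iso_carrier[OF f])
  then show "scalar_corner (Suc d) E0"
    by (intro scalar_corner_alg_iso[OF f primal.E_carrier]) simp
qed simp

lemma Es_sum: "mat_sum (Suc d) Es [0..<Suc d] = 1\<^sub>m (Suc d)"
proof -
  let ?S = "mat_sum (Suc d) Es [0..<Suc d]"
  have S: "?S \<in> carrier_mat (Suc d) (Suc d)" by (rule mat_sum_carrier) simp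
  have annihilated: "f (Es k) * f (1\<^sub>m (Suc d) - ?S) = 0\<^sub>m (Suc d) (Suc d)" if k: "k \<le> d" for k
  proof -
    have split: "[0..<Suc d] = [0..<k] @ k # [Suc k..<Suc d]" using k by (intro upt_split_at) simp
    have "Es k * ?S = mat_sum (Suc d) (\<lambda>j. Es k * Es j) [0..<Suc d]"
      by (rule mult_mat_sum) auto
    also have "\<dots> = Es k * Es k"
      unfolding split using k by (subst mat_sum_single) (auto simp: dual.E_mult_E)
    also have "\<dots> = Es k" using k by (rule dual.E_idem)
    finally have "Es k * (1\<^sub>m (Suc d) - ?S) = Es k - Es k"
      by (simp add: mult_minus_distrib_mat[OF dual.E_carrier one_carrier_mat S]
          right_mult_one_mat[OF dual.E_carrier])
    then have "Es k * (1\<^sub>m (Suc d) - ?S) = 0\<^sub>m (Suc d) (Suc d)" by simp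
    then show ?thesis
      using S by (simp add: alg_iso_mult[OF f, symmetric] alg_iso_zero[OF f])
  qed
  have "f (1\<^sub>m (Suc d) - ?S) = 0\<^sub>m (Suc d) (Suc d)"
    by (rule upper_bidiag_idems_annihilate[OF f_Es _ annihilated]) (use S alg_iso_carrier[OF f] in auto)
  then have "1\<^sub>m (Suc d) - ?S = 0\<^sub>m (Suc d) (Suc d)"
    using S by (simp add: alg_iso_eq_zero_iff[OF f])
  then show ?thesis
    by (rule eq_of_minus_eq_zero_mat[symmetric, rotated 2]) (use S in auto)
qed

lemma Es_block_mult:
  assumes "\<And>j. j \<in> set xs \<Longrightarrow> j \<le> d" "\<And>l. l \<in> set ys \<Longrightarrow> l \<le> d"
  shows "mat_sum (Suc d) Es xs * A * mat_sum (Suc d) Es ys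
    = mat_sum (Suc d) (\<lambda>j. mat_sum (Suc d) (\<lambda>l. Es j * A * Es l) ys) xs"
proof -
  have "mat_sum (Suc d) Es xs * A = mat_sum (Suc d) (\<lambda>j. Es j * A) xs"
    by (rule mat_sum_mult) auto
  moreover have "mat_sum (Suc d) (\<lambda>j. Es j * A) xs * mat_sum (Suc d) Es ys
      = mat_sum (Suc d) (\<lambda>j. Es j * A * mat_sum (Suc d) Es ys) xs"
    by (rule mat_sum_mult) (auto intro: mat_sum_carrier)
  moreover have "Es j * A * mat_sum (Suc d) Es ys = mat_sum (Suc d) (\<lambda>l. Es j * A * Es l) ys" for j
    by (rule mult_mat_sum) auto
  ultimately show ?thesis by simp
qed

lemma mat_tr_E0_block_swap:
  assumes i: "1 \<le> i" "i \<le> d"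
  shows "mat_tr (E0 * (Es (i - 1) * A * Es i)) = mat_tr (E0 * (Es i * A * Es (i - 1)))"
proof -
  let ?P = "mat_sum (Suc d) Es [0..<i]" and ?Q = "mat_sum (Suc d) Es [i..<Suc d]"
  have P: "?P \<in> carrier_mat (Suc d) (Suc d)" and Q: "?Q \<in> carrier_mat (Suc d) (Suc d)"
    by (auto intro: mat_sum_carrier)
  have lower: "[0..<i] = [0..<i - 1] @ (i - 1) # []"
    using i by (cases i) (simp_all add: upt_Suc)
  have upper: "[i..<Suc d] = [] @ i # [Suc i..<Suc d]"
    using i by (simp add: upt_conv_Cons)
  have PAQ: "?P * A * ?Q = Es (i - 1) * A * Es i"
  proof -
    have "?P * A * ?Q
        = mat_sum (Suc d) (\<lambda>j. mat_sum (Suc d) (\<lambda>l. Es j * A * Es l) [i..<Suc d]) [0..<i]"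
      using i by (intro Es_block_mult) auto
    also have "\<dots> = mat_sum (Suc d) (\<lambda>l. Es (i - 1) * A * Es l) [i..<Suc d]"
      unfolding lower using i
      by (subst mat_sum_single) (auto intro!: mat_sum_carrier mat_sum_zero tridiagonal)
    also have "\<dots> = Es (i - 1) * A * Es i"
      unfolding upper using i by (subst mat_sum_single) (auto intro: tridiagonal)
    finally show ?thesis .
  qed
  have QAP: "?Q * A * ?P = Es i * A * Es (i - 1)"
  proof -
    have "?Q * A * ?P
        = mat_sum (Suc d) (\<lambda>j. mat_sum (Suc d) (\<lambda>l. Es j * A * Es l) [0..<i]) [i..<Suc d]"
      using i by (intro Es_block_mult) auto
    also have "\<dots> = mat_sum (Suc d) (\<lambda>l. Es i * A * Es l) [0..<i]"
      unfolding upper using i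
      by (subst mat_sum_single) (auto intro!: mat_sum_carrier mat_sum_zero tridiagonal)
    also have "\<dots> = Es i * A * Es (i - 1)"
      unfolding lower using i by (subst mat_sum_single) (auto intro: tridiagonal)
    finally show ?thesis .
  qed
  have "?P + ?Q = 1\<^sub>m (Suc d)"
    using i Es_sum upt_add_eq_append[of 0 i "Suc d - i"] by (simp add: mat_sum_append)
  then show ?thesis
    using mat_tr_complement_swap[OF A_carrier primal.E_carrier P Q primal.E_commute] PAQ QAP by simp
qed

lemma trace_identity:
  assumes i: "1 \<le> i" "i \<le> d"
  shows "mat_tr (Es i * A * Es (i - 1) * A) * mat_tr (E0 * Es i) * mat_tr (E0 * Es (i - 1))
    = mat_tr (E0 * (Es i * A * Es (i - 1))) ^ 2"
proof -
  have "mat_tr (Es i * A * Es (i - 1) * A) * mat_tr (E0 * Es i) * mat_tr (E0 * Es (i - 1))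
      = mat_tr (E0 * (Es i * A * Es (i - 1))) * mat_tr (E0 * (Es (i - 1) * A * Es i))"
  proof (rule mat_tr_rank_one_product[of _ "Suc d"])
    have "Es j * E0 * Es j = mat_tr (E0 * Es j) \<cdot>\<^sub>m Es j" if "j \<le> d" for j
      using Es_rank_one[OF that, of E0] mat_tr_mult_commute[of E0 "Suc d" "Suc d" "Es j"] by simp
    then show "Es i * E0 * Es i = mat_tr (E0 * Es i) \<cdot>\<^sub>m Es i"
      and "Es (i - 1) * E0 * Es (i - 1) = mat_tr (E0 * Es (i - 1)) \<cdot>\<^sub>m Es (i - 1)"
      using i by simp_all
    show "E0 * (Es i * A * Es (i - 1)) * E0 = mat_tr (E0 * (Es i * A * Es (i - 1))) \<cdot>\<^sub>m E0"
      using E0_rank_one[of "Es i * A * Es (i - 1)"]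
        mat_tr_mult_commute[of "Es i * A * Es (i - 1)" "Suc d" "Suc d" E0] by simp
  qed simp_all
  then show ?thesis using mat_tr_E0_block_swap[OF i] by (simp add: power2_eq_square)
qed

lemma f_E0_zero_col: "r \<le> d \<Longrightarrow> 0 < c \<Longrightarrow> c \<le> d \<Longrightarrow> f E0 $$ (r,c) = 0"
  using upper_bidiag_eigen.zero_below[OF upper_bidiag_idem.axioms(1)[OF f_E0], of c r]
    carrier_matD[OF alg_iso_carrier[OF f primal.E_carrier]] by simp

lemma f_E0_corner: "f E0 $$ (0,0) = 1"
  using upper_bidiag_idem.pivot[OF f_E0] carrier_matD[OF alg_iso_carrier[OF f primal.E_carrier]] by simp

lemma g_E0_zero_row: "r < d \<Longrightarrow> c \<le> d \<Longrightarrow> g E0 $$ (r,c) = 0"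
  using upper_bidiag_eigen.zero_left[OF upper_bidiag_idem.axioms(1)[OF g_E0], of r c]
    carrier_matD[OF alg_iso_carrier[OF g primal.E_carrier]] by simp

lemma g_E0_corner: "g E0 $$ (d,d) = 1"
  using upper_bidiag_idem.pivot[OF g_E0] carrier_matD[OF alg_iso_carrier[OF g primal.E_carrier]] by simp

lemma alg_iso_E0_sandwich:
  assumes h: "alg_iso (Suc d) h" and X: "X \<in> carrier_mat (Suc d) (Suc d)"
  shows "h E0 * h X * h E0 = mat_tr (E0 * X) \<cdot>\<^sub>m h E0"
proof -
  have "E0 * X * E0 = mat_tr (E0 * X) \<cdot>\<^sub>m E0"
    using E0_rank_one[OF X] mat_tr_mult_commute[OF X primal.E_carrier] by simp
  then show ?thesis
    using X by (simp add: alg_iso_mult[OF h] alg_iso_smult[OF h] flip: alg_iso_mult[OF h])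
qed

lemma mat_tr_E0_first_split:
  assumes X: "X \<in> carrier_mat (Suc d) (Suc d)"
  shows "mat_tr (E0 * X) = (f X * f E0) $$ (0,0)"
proof -
  have F: "f E0 \<in> carrier_mat (Suc d) (Suc d)" and fX: "f X \<in> carrier_mat (Suc d) (Suc d)"
    using alg_iso_carrier[OF f] X by auto
  have "mat_tr (E0 * X) = (f E0 * (f X * f E0)) $$ (0,0)"
    using alg_iso_E0_sandwich[OF f X] f_E0_corner F fX by simp
  also have "\<dots> = (\<Sum>k<Suc d. f E0 $$ (0,k) * (f X * f E0) $$ (k,0))"
    using F fX by (intro index_mult_mat_sum) auto
  also have "\<dots> = (f X * f E0) $$ (0,0)"
    by (subst sum.lessThan_Suc_shift) (simp add: f_E0_zero_col f_E0_corner)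
  finally show ?thesis .
qed

lemma mat_tr_E0_second_split:
  assumes X: "X \<in> carrier_mat (Suc d) (Suc d)"
  shows "mat_tr (E0 * X) = (g E0 * g X) $$ (d,d)"
proof -
  have G: "g E0 \<in> carrier_mat (Suc d) (Suc d)" and gX: "g X \<in> carrier_mat (Suc d) (Suc d)"
    using alg_iso_carrier[OF g] X by auto
  have "mat_tr (E0 * X) = (g E0 * g X * g E0) $$ (d,d)"
    using alg_iso_E0_sandwich[OF g X] g_E0_corner G gX by simp
  also have "\<dots> = (\<Sum>k<Suc d. (g E0 * g X) $$ (d,k) * g E0 $$ (k,d))"
    using G gX by (intro index_mult_mat_sum) auto
  also have "\<dots> = (g E0 * g X) $$ (d,d)"
    by (simp add: g_E0_zero_row g_E0_corner)
  finally show ?thesis .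
qed

lemma mat_tr_E0_Es_first_split:
  "j \<le> d \<Longrightarrow> mat_tr (E0 * Es j) = f (Es j) $$ (0,j) * (f (Es j) * f E0) $$ (j,0)"
  using mat_tr_E0_first_split[of "Es j"]
    upper_bidiag_idem.mult_row_factor[OF f_Es, of j "f E0" "Suc d" 0 0]
  by (simp add: alg_iso_carrier[OF f])

lemma mat_tr_E0_Es_second_split:
  "j \<le> d \<Longrightarrow> mat_tr (E0 * Es j) = (g E0 * g (Es j)) $$ (d,j) * g (Es j) $$ (j,d)"
  using mat_tr_E0_second_split[of "Es j"]
    upper_bidiag_idem.mult_col_factor[OF g_Es, of j "g E0" "Suc d" d d]
  by (simp add: alg_iso_carrier[OF g])

lemma mat_tr_E0_block_first_split:
  assumes i: "1 \<le> i" "i \<le> d"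
  shows "mat_tr (E0 * (Es i * A * Es (i - 1)))
    = f (Es i) $$ (0,i) * (f (Es (i - 1)) * f E0) $$ (i - 1, 0)"
proof -
  interpret Pi: upper_bidiag_idem d \<theta>s \<phi> i "f (Es i)" using f_Es i by simp
  interpret Pm: upper_bidiag_idem d \<theta>s \<phi> "i - 1" "f (Es (i - 1))" using f_Es i by simp
  let ?W = "f (Es (i - 1)) * f E0"
  have W: "?W \<in> carrier_mat (Suc d) (Suc d)" by (simp add: alg_iso_carrier[OF f])
  have W0: "?W $$ (r,0) = 0" if "i \<le> r" "r \<le> d" for r
    using Pm.mult_row_factor[of "f E0" "Suc d" r 0] Pm.zero_below[of r "i - 1"] that i
    by (simp add: alg_iso_carrier[OF f])
  have "f (Es i * A * Es (i - 1)) * f E0 = f (Es i) * (lower_bidiag d \<theta> * ?W)"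
    by (simp add: alg_iso_mult[OF f] f_A alg_iso_carrier[OF f]
        assoc_mult_mat[of _ "Suc d" "Suc d" _ "Suc d" _ "Suc d"])
  then have "mat_tr (E0 * (Es i * A * Es (i - 1))) = (f (Es i) * (lower_bidiag d \<theta> * ?W)) $$ (0,0)"
    using mat_tr_E0_first_split[of "Es i * A * Es (i - 1)"] by simp
  also have "\<dots> = f (Es i) $$ (0,i) * (f (Es i) * (lower_bidiag d \<theta> * ?W)) $$ (i,0)"
    using W by (intro Pi.mult_row_factor[where m = "Suc d"]) auto
  also have "(f (Es i) * (lower_bidiag d \<theta> * ?W)) $$ (i,0) = ?W $$ (i - 1, 0)"
    using W W0 i by (intro Pi.pivot_row_mult_lower_bidiag) auto
  finally show ?thesis .
qed

lemma mat_tr_E0_block_second_split: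
  assumes i: "1 \<le> i" "i \<le> d"
  shows "mat_tr (E0 * (Es i * A * Es (i - 1)))
    = (g E0 * g (Es i)) $$ (d,i) * g (Es (i - 1)) $$ (i - 1, d)"
proof -
  interpret Qi: upper_bidiag_idem d \<theta>s \<phi>' i "g (Es i)" using g_Es i by simp
  interpret Qm: upper_bidiag_idem d \<theta>s \<phi>' "i - 1" "g (Es (i - 1))" using g_Es i by simp
  let ?L = "lower_bidiag d (\<lambda>r. \<theta> (d - r))" and ?W = "g E0 * g (Es i)"
  have W: "?W \<in> carrier_mat (Suc d) (Suc d)" by (simp add: alg_iso_carrier[OF g])
  have W0: "?W $$ (d,c) = 0" if "c \<le> i - 1" for c
    using Qi.mult_col_factor[of "g E0" "Suc d" d c] Qi.zero_left[of c i] that i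
    by (simp add: alg_iso_carrier[OF g])
  have "g E0 * g (Es i * A * Es (i - 1)) = ?W * ?L * g (Es (i - 1))"
    by (simp add: alg_iso_mult[OF g] g_A alg_iso_carrier[OF g]
        assoc_mult_mat[of _ "Suc d" "Suc d" _ "Suc d" _ "Suc d"])
  then have "mat_tr (E0 * (Es i * A * Es (i - 1))) = (?W * ?L * g (Es (i - 1))) $$ (d,d)"
    using mat_tr_E0_second_split[of "Es i * A * Es (i - 1)"] by simp
  also have "\<dots> = (?W * ?L * g (Es (i - 1))) $$ (d, i - 1) * g (Es (i - 1)) $$ (i - 1, d)"
    using W by (intro Qm.mult_col_factor[where m = "Suc d"]) auto
  also have "(?W * ?L * g (Es (i - 1))) $$ (d, i - 1) = ?W $$ (d,i)"
    using W W0 i Qm.mult_lower_bidiag_pivot_col[of ?W "Suc d" d] by simp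
  finally show ?thesis .
qed

lemma mat_tr_E0_Es_nonzero:
  assumes j: "j \<le> d"
  shows "mat_tr (E0 * Es j) \<noteq> 0"
proof
  assume zero: "mat_tr (E0 * Es j) = 0"
  interpret P: upper_bidiag_idem d \<theta>s \<phi> j "f (Es j)" using f_Es[OF j] .
  interpret Q: upper_bidiag_idem d \<theta>s \<phi>' j "g (Es j)" using g_Es[OF j] .
  have F: "f E0 \<in> carrier_mat (Suc d) (Suc d)" and G: "g E0 \<in> carrier_mat (Suc d) (Suc d)"
    by (simp_all add: alg_iso_carrier[OF f] alg_iso_carrier[OF g])
  have pivot_col: "(f (Es j) * f E0) $$ (j,0) = 0"
    using zero mat_tr_E0_Es_first_split[OF j] P.first_row_pivot_nonzero by simp
  have "f (Es j) * f E0 = 0\<^sub>m (Suc d) (Suc d)"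
  proof (rule mat_eq_zeroI)
    fix r c assume r: "r < Suc d" and c: "c < Suc d"
    show "(f (Es j) * f E0) $$ (r,c) = 0"
    proof (cases "c = 0")
      case True
      then show ?thesis using P.mult_row_factor[OF F, of r 0] pivot_col r by simp
    next
      case False
      have "(f (Es j) * f E0) $$ (r,c) = (\<Sum>k<Suc d. f (Es j) $$ (r,k) * f E0 $$ (k,c))"
        using r c by (intro index_mult_mat_sum[OF P.carrier F])
      also have "\<dots> = 0" using False c by (intro sum.neutral) (simp add: f_E0_zero_col)
      finally show ?thesis .
    qed
  qed (simp add: F P.carrier)
  then have "Es j * E0 = 0\<^sub>m (Suc d) (Suc d)"
    by (simp add: alg_iso_mult[OF f, symmetric] alg_iso_eq_zero_iff[OF f])
  then have "g (Es j) * g E0 = 0\<^sub>m (Suc d) (Suc d)"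
    by (simp add: alg_iso_mult[OF g, symmetric] alg_iso_zero[OF g])
  then have "(g (Es j) * g E0) $$ (j,d) = 0" using j by simp
  moreover have "(g (Es j) * g E0) $$ (j,d) = (\<Sum>k<Suc d. g (Es j) $$ (j,k) * g E0 $$ (k,d))"
    using j by (intro index_mult_mat_sum[OF Q.carrier G]) auto
  moreover have "\<dots> = g (Es j) $$ (j,d)"
    by (simp add: g_E0_zero_row g_E0_corner)
  ultimately show False using Q.last_col_pivot_nonzero by simp
qed

lemma trace_pivot_relation:
  assumes i: "1 \<le> i" "i \<le> d"
  shows "mat_tr (Es i * A * Es (i - 1) * A) * (f (Es (i - 1)) $$ (0, i - 1) * g (Es i) $$ (i,d))
    = f (Es i) $$ (0,i) * g (Es (i - 1)) $$ (i - 1, d)"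
proof -
  let ?x = "mat_tr (Es i * A * Es (i - 1) * A)" and ?N = "mat_tr (E0 * (Es i * A * Es (i - 1)))"
  let ?Ti = "mat_tr (E0 * Es i)" and ?Tm = "mat_tr (E0 * Es (i - 1))"
  have first: "?N * f (Es (i - 1)) $$ (0, i - 1) = f (Es i) $$ (0,i) * ?Tm"
    using mat_tr_E0_block_first_split[OF i] mat_tr_E0_Es_first_split[of "i - 1"] i
    by (simp add: mult_ac)
  have second: "?N * g (Es i) $$ (i,d) = g (Es (i - 1)) $$ (i - 1, d) * ?Ti"
    using mat_tr_E0_block_second_split[OF i] mat_tr_E0_Es_second_split[of i] i
    by (simp add: mult_ac)
  have "?x * (f (Es (i - 1)) $$ (0, i - 1) * g (Es i) $$ (i,d)) * (?Ti * ?Tm)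
      = (?N * f (Es (i - 1)) $$ (0, i - 1)) * (?N * g (Es i) $$ (i,d))"
    using trace_identity[OF i] by (simp add: power2_eq_square mult_ac)
  also have "\<dots> = f (Es i) $$ (0,i) * g (Es (i - 1)) $$ (i - 1, d) * (?Ti * ?Tm)"
    unfolding first second by (simp add: mult_ac)
  finally show ?thesis
    using mat_tr_E0_Es_nonzero[of i] mat_tr_E0_Es_nonzero[of "i - 1"] i by simp
qed

lemma first_split_pivots:
  assumes i: "1 \<le> i" "i \<le> d"
  shows "f (Es i) $$ (0,i) * tau_s \<theta>s i (\<theta>s i) = (\<Prod>k\<in>{1..i - 1}. \<phi> k) * \<phi> i"
    and "f (Es (i - 1)) $$ (0, i - 1) * tau_s \<theta>s (i - 1) (\<theta>s (i - 1)) = (\<Prod>k\<in>{1..i - 1}. \<phi> k)"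
  using upper_bidiag_idem.first_row_pivot[OF f_Es, of i]
    upper_bidiag_idem.first_row_pivot[OF f_Es, of "i - 1"] i
  by (cases i; simp add: tau_s_def prod.cl_ivl_Suc)+

lemma second_split_pivots:
  assumes i: "1 \<le> i" "i \<le> d"
  shows "g (Es i) $$ (i,d) * eta_s d \<theta>s (d - i) (\<theta>s i) = (\<Prod>k\<in>{i<..d}. \<phi>' k)"
    and "g (Es (i - 1)) $$ (i - 1, d) * eta_s d \<theta>s (d - i + 1) (\<theta>s (i - 1))
      = \<phi>' i * (\<Prod>k\<in>{i<..d}. \<phi>' k)"
proof -
  show "g (Es i) $$ (i,d) * eta_s d \<theta>s (d - i) (\<theta>s i) = (\<Prod>k\<in>{i<..d}. \<phi>' k)"
    using upper_bidiag_idem.last_col_pivot[OF g_Es, of i] i by (simp add: eta_s_eq_prod)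
  have "g (Es (i - 1)) $$ (i - 1, d) * eta_s d \<theta>s (d - (i - 1)) (\<theta>s (i - 1))
      = (\<Prod>k\<in>{i - 1<..d}. \<phi>' k)"
    using upper_bidiag_idem.last_col_pivot[OF g_Es, of "i - 1"] i by (subst eta_s_eq_prod) simp_all
  also have "{i - 1<..d} = insert i {i<..d}" using i by auto
  finally have "g (Es (i - 1)) $$ (i - 1, d) * eta_s d \<theta>s (d - (i - 1)) (\<theta>s (i - 1))
      = \<phi>' i * (\<Prod>k\<in>{i<..d}. \<phi>' k)" by simp
  moreover have "d - i + 1 = d - (i - 1)" using i by simp
  ultimately show "g (Es (i - 1)) $$ (i - 1, d) * eta_s d \<theta>s (d - i + 1) (\<theta>s (i - 1))
      = \<phi>' i * (\<Prod>k\<in>{i<..d}. \<phi>' k)" by (simp only:)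
qed

lemma trace_formula:
  assumes i: "1 \<le> i" "i \<le> d"
  shows "mat_tr (Es i * A * Es (i - 1) * A)
    = \<phi> i * \<phi>' i * ((tau_s \<theta>s (i - 1) (\<theta>s (i - 1)) * eta_s d \<theta>s (d - i) (\<theta>s i)) /
        (tau_s \<theta>s i (\<theta>s i) * eta_s d \<theta>s (d - i + 1) (\<theta>s (i - 1))))"
proof -
  let ?x = "mat_tr (Es i * A * Es (i - 1) * A)"
  let ?ai = "f (Es i) $$ (0,i)" and ?am = "f (Es (i - 1)) $$ (0, i - 1)"
  let ?bi = "g (Es i) $$ (i,d)" and ?bm = "g (Es (i - 1)) $$ (i - 1, d)"
  let ?\<tau>i = "tau_s \<theta>s i (\<theta>s i)" and ?\<tau>m = "tau_s \<theta>s (i - 1) (\<theta>s (i - 1))"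
  let ?\<eta>i = "eta_s d \<theta>s (d - i) (\<theta>s i)" and ?\<eta>m = "eta_s d \<theta>s (d - i + 1) (\<theta>s (i - 1))"
  let ?\<Phi> = "\<Prod>k\<in>{1..i - 1}. \<phi> k" and ?\<Psi> = "\<Prod>k\<in>{i<..d}. \<phi>' k"
  note a = first_split_pivots[OF i] and b = second_split_pivots[OF i]
  have nonzero: "?\<Phi> \<noteq> 0" "?\<Psi> \<noteq> 0" "\<phi> i \<noteq> 0" "\<phi>' i \<noteq> 0"
    using \<phi>_nonzero \<phi>'_nonzero i by (auto simp: prod_zero_iff)
  have "?x * ?\<Phi> * ?\<Psi> * (?\<tau>i * ?\<eta>m) = ?x * (?am * ?\<tau>m) * (?bi * ?\<eta>i) * (?\<tau>i * ?\<eta>m)"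
    by (simp only: a(2) b(1))
  also have "\<dots> = ?x * (?am * ?bi) * (?\<tau>m * ?\<eta>i) * (?\<tau>i * ?\<eta>m)"
    by (simp only: mult_ac)
  also have "\<dots> = ?ai * ?bm * (?\<tau>m * ?\<eta>i) * (?\<tau>i * ?\<eta>m)"
    by (simp only: trace_pivot_relation[OF i])
  also have "\<dots> = (?ai * ?\<tau>i) * (?bm * ?\<eta>m) * (?\<tau>m * ?\<eta>i)"
    by (simp only: mult_ac)
  also have "\<dots> = (?\<Phi> * \<phi> i) * (\<phi>' i * ?\<Psi>) * (?\<tau>m * ?\<eta>i)"
    by (simp only: a(1) b(2))
  also have "\<dots> = \<phi> i * \<phi>' i * ?\<Phi> * ?\<Psi> * (?\<tau>m * ?\<eta>i)"
    by (simp only: mult_ac)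
  finally have "?x * (?\<tau>i * ?\<eta>m) = \<phi> i * \<phi>' i * (?\<tau>m * ?\<eta>i)"
    using nonzero by (simp add: mult_ac)
  moreover have "?\<tau>i * ?\<eta>m \<noteq> 0"
    using a(1) b(2) nonzero by auto
  ultimately show ?thesis by (simp add: field_simps)
qed

end

theorem theorem17p8:
  fixes d :: nat
    and A As :: "'a::field mat"
    and \<theta> \<theta>s \<phi> \<phi>' :: "nat \<Rightarrow> 'a"
  assumes LS: "leonard_system d A As \<theta> \<theta>s"
    and split1: "first_split_seq d A As \<theta> \<theta>s \<phi>"
    and split2: "first_split_seq d A As (\<lambda>i. \<theta> (d - i)) \<theta>s \<phi>'"
    and i: "1 \<le> i" "i \<le> d"
  shows "mat_tr (prim_idem d As \<theta>s i * A * prim_idem d As \<theta>s (i - 1) * A)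
       = \<phi> i * \<phi>' i *
         ((tau_s \<theta>s (i - 1) (\<theta>s (i - 1)) * eta_s d \<theta>s (d - i) (\<theta>s i)) /
          (tau_s \<theta>s i (\<theta>s i) * eta_s d \<theta>s (d - i + 1) (\<theta>s (i - 1))))"
proof -
  obtain f where "\<forall>k. 1 \<le> k \<and> k \<le> d \<longrightarrow> \<phi> k \<noteq> 0" "alg_iso (Suc d) f"
    "f A = lower_bidiag d \<theta>" "f As = upper_bidiag d \<theta>s \<phi>"
    using split1 unfolding first_split_seq_def by blast
  moreover obtain g where "\<forall>k. 1 \<le> k \<and> k \<le> d \<longrightarrow> \<phi>' k \<noteq> 0" "alg_iso (Suc d) g"
    "g A = lower_bidiag d (\<lambda>i. \<theta> (d - i))" "g As = upper_bidiag d \<theta>s \<phi>'"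
    using split2 unfolding first_split_seq_def by blast
  ultimately interpret leonard_split d A As \<theta> \<theta>s \<phi> \<phi>' f g
    using LS i by unfold_locales auto
  show ?thesis by (rule trace_formula[OF i])
qed

end
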